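(* Let $\mathcal C$ be a Clifford circuit with linear outcome code $\mathcal O(\mathcal C)$ and let $u\in\mathcal O(\mathcal C)^\perp$ be nonzero. Let $\ell_u$ (resp. $\ell_u'$) be the minimum (resp. maximum) of $\ell_j$ over $j$ with $u_j=1$. If $\ell<\ell_u$ or $\ell\ge\ell_u'$ (with $0\le\ell\le\Delta$), then $\overleftarrow{F(u)}_{\ell+0.5}=I$.
   Context: A Clifford circuit on $n$ qubits is a finite sequence of operations, each a unitary Clifford gate or the measurement of a Hermitian $n$-qubit Pauli, each with a level in $\{1,2,\dots\}$; operations of equal level have disjoint supports and levels are nondecreasing; depth $\Delta$ = maximal level. In circuit order the $j$-th measurement measures $S_j$ at level $\ell_j$ ($j=1,\dots,m$); outcome $o_j=0$ for eigenvalue $+1$, $1$ for $-1$. The outcome code $\mathcal O(\mathcal C)$ is the set of outcome bit-strings occurring with nonzero probability for some input state; $\perp$ refers to $(u|v)=\sum u_iv_i\bmod2$. $\overline{\mathcal P}_N$ is the $N$-qubit Pauli group modulo phases. $U_\ell$ is the product of unitary gates of level $\ell$ (identity if none). Fault operators $F\in\overline{\mathcal P}_{n(\Delta+1)}$ act on qubits $(\ell+0.5,q)$, $0\le\ell\le\Delta$, $1\le q\le n$, with level components $F_{\ell+0.5}$; $\eta_{\ell+0.5}(P)$ is $P$ at level $\ell+0.5$ and $I$ elsewhere. Back-cumulant $\overleftarrow F$: start with $F$; for $\ell=\Delta,\dots,1$ replace $\overleftarrow F_{\ell-0.5}$ by $\overleftarrow F_{\ell-0.5}\cdot U_\ell^{-1}\overleftarrow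 F_{\ell+0.5}U_\ell$. $F(u)=\prod_j\eta_{\ell_j-0.5}(S_j^{u_j})$. *)

theory Defs
  imports Complex_Main "Jordan_Normal_Form.Matrix"
begin

text \<open>An n-qubit Pauli modulo phases is a pair (x,z) of bit vectors, the qubits being 0..n-1;
  it stands for X^x Z^z. Bits beyond n must be off.\<close>
type_synonym pauli = "(nat \<Rightarrow> bool) \<times> (nat \<Rightarrow> bool)"

definition pauli_on :: "nat \<Rightarrow> pauli \<Rightarrow> bool" where
  "pauli_on n p \<longleftrightarrow> (\<forall>q\<ge>n. \<not> fst p q \<and> \<not> snd p q)"

definition pid :: pauli where "pid = (\<lambda>_. False, \<lambda>_. False)"

definition ptimes :: "pauli \<Rightarrow> pauli \<Rightarrow> pauli" where
  "ptimes p p' = (\<lambda>q. fst p q \<noteq> fst p' q, \<lambda>q. snd p q \<noteq> snd p' q)"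

definition pX :: "nat \<Rightarrow> pauli" where "pX q = (\<lambda>i. i = q, \<lambda>_. False)"
definition pZ :: "nat \<Rightarrow> pauli" where "pZ q = (\<lambda>_. False, \<lambda>i. i = q)"

text \<open>Hermitian matrix representative i^(x.z) X^x Z^z on (C^2)^{\<otimes>n}; basis index b < 2^n,
  qubit q corresponds to bit q of b.\<close>
definition pmat :: "nat \<Rightarrow> pauli \<Rightarrow> complex mat" where
  "pmat n p = mat (2^n) (2^n) (\<lambda>(a,b).
     if (\<forall>q<n. bit a q \<longleftrightarrow> (bit b q \<noteq> fst p q))
     then \<i> ^ card {q. q < n \<and> fst p q \<and> snd p q} * (-1) ^ card {q. q < n \<and> snd p q \<and> bit b q}
     else 0)"

text \<open>Hermitian Pauli = sign bit (True meaning -1) and Pauli modulo phase.\<close>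
type_synonym hpauli = "bool \<times> pauli"

definition hpmat :: "nat \<Rightarrow> hpauli \<Rightarrow> complex mat" where
  "hpmat n S = (if fst S then -1 else 1) \<cdot>\<^sub>m pmat n (snd S)"

definition adj :: "complex mat \<Rightarrow> complex mat" where
  "adj A = mat (dim_col A) (dim_row A) (\<lambda>(i,j). cnj (A $$ (j,i)))"

definition is_clifford :: "nat \<Rightarrow> complex mat \<Rightarrow> bool" where
  "is_clifford n U \<longleftrightarrow> U \<in> carrier_mat (2^n) (2^n) \<and> adj U * U = 1\<^sub>m (2^n) \<and> U * adj U = 1\<^sub>m (2^n)
     \<and> (\<forall>p. pauli_on n p \<longrightarrow> (\<exists>S. pauli_on n (snd S) \<and> U * pmat n p * adj U = hpmat n S))"

text \<open>Support of a unitary: qubits on which it does not act as identity, i.e. with which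
  single-qubit X or Z it fails to commute.\<close>
definition gate_support :: "nat \<Rightarrow> complex mat \<Rightarrow> nat set" where
  "gate_support n U = {q. q < n \<and> \<not> (U * pmat n (pX q) = pmat n (pX q) * U \<and> U * pmat n (pZ q) = pmat n (pZ q) * U)}"

datatype op = Gate "complex mat" nat | Meas hpauli nat

fun op_level :: "op \<Rightarrow> nat" where
  "op_level (Gate U l) = l" | "op_level (Meas S l) = l"

fun op_support :: "nat \<Rightarrow> op \<Rightarrow> nat set" where
  "op_support n (Gate U l) = gate_support n U"
| "op_support n (Meas S l) = {q. q < n \<and> (fst (snd S) q \<or> snd (snd S) q)}"

fun op_ok :: "nat \<Rightarrow> op \<Rightarrow> bool" where
  "op_ok n (Gate U l) = is_clifford n U"
| "op_ok n (Meas S l) = pauli_on n (snd S)"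

definition wf_circuit :: "nat \<Rightarrow> op list \<Rightarrow> bool" where
  "wf_circuit n C \<longleftrightarrow> (\<forall>g\<in>set C. op_ok n g \<and> 1 \<le> op_level g)
     \<and> sorted (map op_level C)
     \<and> (\<forall>i j. i < j \<and> j < length C \<and> op_level (C!i) = op_level (C!j)
            \<longrightarrow> op_support n (C!i) \<inter> op_support n (C!j) = {})"

definition depth :: "op list \<Rightarrow> nat" where
  "depth C = Max (op_level ` set C)"

definition meas :: "op list \<Rightarrow> (hpauli \<times> nat) list" where
  "meas C = concat (map (\<lambda>g. case g of Meas S l \<Rightarrow> [(S,l)] | Gate U l \<Rightarrow> []) C)"

definition proj :: "nat \<Rightarrow> hpauli \<Rightarrow> bool \<Rightarrow> complex mat" where
  "proj n S b = (1/2) \<cdot>\<^sub>m (1\<^sub>m (2^n) + (if b then -1 else 1) \<cdot>\<^sub>m hpmat n S)"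

text \<open>Unnormalised post-measurement state for a given outcome string.\<close>
fun exec :: "nat \<Rightarrow> op list \<Rightarrow> bool list \<Rightarrow> complex vec \<Rightarrow> complex vec" where
  "exec n [] os v = v"
| "exec n (Gate U l # C) os v = exec n C os (U *\<^sub>v v)"
| "exec n (Meas S l # C) (b # os) v = exec n C os (proj n S b *\<^sub>v v)"
| "exec n (Meas S l # C) [] v = v"

definition sq_norm :: "complex vec \<Rightarrow> real" where
  "sq_norm v = (\<Sum>i<dim_vec v. (cmod (v $ i))^2)"

definition outcome_prob :: "nat \<Rightarrow> op list \<Rightarrow> complex vec \<Rightarrow> bool list \<Rightarrow> real" where
  "outcome_prob n C \<psi> os = sq_norm (exec n C os \<psi>)"

definition outcome_code :: "nat \<Rightarrow> op list \<Rightarrow> bool list set" where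
  "outcome_code n C = {os. length os = length (meas C) \<and>
      (\<exists>\<psi>. \<psi> \<in> carrier_vec (2^n) \<and> sq_norm \<psi> = 1 \<and> outcome_prob n C \<psi> os \<noteq> 0)}"

definition xor_list :: "bool list \<Rightarrow> bool list \<Rightarrow> bool list" where
  "xor_list a b = map2 (\<lambda>x y. x \<noteq> y) a b"

definition linear_code :: "nat \<Rightarrow> bool list set \<Rightarrow> bool" where
  "linear_code m Cd \<longleftrightarrow> (\<forall>a\<in>Cd. length a = m) \<and> replicate m False \<in> Cd
     \<and> (\<forall>a\<in>Cd. \<forall>b\<in>Cd. xor_list a b \<in> Cd)"

definition dual_code :: "nat \<Rightarrow> bool list set \<Rightarrow> bool list set" where
  "dual_code m Cd = {u. length u = m \<and> (\<forall>a\<in>Cd. even (card {j. j < m \<and> u!j \<and> a!j}))}"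

text \<open>A fault operator is given by its level components: F l is the component at level l+0.5.\<close>

definition U_level :: "nat \<Rightarrow> op list \<Rightarrow> nat \<Rightarrow> complex mat" where
  "U_level n C l = foldl (\<lambda>acc U. U * acc) (1\<^sub>m (2^n))
     (concat (map (\<lambda>g. case g of Gate U k \<Rightarrow> (if k = l then [U] else []) | Meas S k \<Rightarrow> []) C))"

definition conjP :: "nat \<Rightarrow> complex mat \<Rightarrow> pauli \<Rightarrow> pauli" where
  "conjP n U p = (THE q. pauli_on n q \<and> (\<exists>s. adj U * pmat n p * U = hpmat n (s, q)))"

function backcum :: "nat \<Rightarrow> op list \<Rightarrow> (nat \<Rightarrow> pauli) \<Rightarrow> nat \<Rightarrow> pauli" where
  "backcum n C F l = (if depth C \<le> l then F l
      else ptimes (F l) (conjP n (U_level n C (Suc l)) (backcum n C F (Suc l))))"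
  by pat_completeness auto
termination by (relation "measure (\<lambda>(n,C,F,l). depth C - l)") auto

text \<open>F(u) = prod_j eta_{l_j - 0.5}(S_j^{u_j}); component index l stands for level l+0.5.\<close>
definition Fu :: "op list \<Rightarrow> bool list \<Rightarrow> nat \<Rightarrow> pauli" where
  "Fu C u l = foldr (\<lambda>j acc. if u!j \<and> snd (meas C ! j) - 1 = l
                           then ptimes (snd (fst (meas C ! j))) acc else acc)
                [0..<length (meas C)] pid"

end

theory Submission
  imports Defs
begin

text \<open>
  Let E be a Pauli fault before the first level and E_k its image after the gates of
  levels up to k. Conjugation by a Clifford unitary preserves the commutation sign of two
  Paulis, so induction down the levels shows that E anticommutes with the back-cumulant at
  level 0.5 iff E_k anticommutes with the component F_(k+0.5) for an odd number of k. For
  F = F(u) this parity is the inner product of u with the outcome flips caused by E. These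
  flips form a codeword: applying E to an input state transforms the outcome distribution by
  exactly this flip pattern, and the zero word occurs because the code is linear. Hence the
  back-cumulant at level 0.5 commutes with every Pauli, i.e. is trivial. Going up, it stays
  trivial through the levels where F(u) has no component, since a Clifford conjugate of a
  nontrivial Pauli is nontrivial; above the last level carrying a component of F(u) it is
  trivial by its definition.
\<close>

unbundle bit_operations_syntax

section \<open>Bit strings and parities\<close>

lemma less_pow2_iff_high_bits: "(a::nat) < 2^n \<longleftrightarrow> (\<forall>q\<ge>n. \<not> bit a q)"
proof
  assume "a < 2^n"
  then show "\<forall>q\<ge>n. \<not> bit a q"
    by (metis bit_take_bit_iff not_less take_bit_nat_eq_self_iff)
next
  assume h: "\<forall>q\<ge>n. \<not> bit a q"
  have "take_bit n a = a"
    by (rule bit_eqI) (metis bit_take_bit_iff h not_less)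
  then show "a < 2^n" by (simp add: take_bit_nat_eq_self_iff)
qed

lemma nat_eq_by_low_bits: "(a::nat) < 2^n \<Longrightarrow> b < 2^n \<Longrightarrow> (\<forall>q<n. bit a q = bit b q) \<Longrightarrow> a = b"
  by (rule bit_eqI) (metis less_pow2_iff_high_bits not_less)

lemma xor_less_pow2: "(a::nat) < 2^n \<Longrightarrow> b < 2^n \<Longrightarrow> a XOR b < 2^n"
  by (simp add: less_pow2_iff_high_bits bit_xor_iff)

lemma xor_xor_cancel: "((a::nat) XOR m) XOR m = a"
  by (rule bit_eqI) (auto simp: bit_xor_iff)

fun bits_nat :: "nat \<Rightarrow> (nat \<Rightarrow> bool) \<Rightarrow> nat" where
  "bits_nat 0 x = 0" | "bits_nat (Suc k) x = of_bool (x 0) + 2 * bits_nat k (x \<circ> Suc)"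

lemma bit_bits_nat: "bit (bits_nat k x) q \<longleftrightarrow> q < k \<and> x q"
proof (induction k arbitrary: x q)
  case 0 then show ?case by simp
next
  case (Suc k) then show ?case
    by (cases q) (auto simp: bit_0 bit_Suc)
qed

lemma bits_nat_less: "bits_nat n x < 2^n"
  using less_pow2_iff_high_bits bit_bits_nat by auto

lemma bits_nat_False: "bits_nat n (\<lambda>_. False) = 0"
  by (rule bit_eqI) (simp add: bit_bits_nat)

fun parity :: "nat \<Rightarrow> (nat \<Rightarrow> bool) \<Rightarrow> bool" where
  "parity 0 R = False" | "parity (Suc k) R = (parity k R \<noteq> R k)"

lemma parity_xor: "parity k (\<lambda>i. P i \<noteq> Q i) = (parity k P \<noteq> parity k Q)"
  by (induction k) auto

lemma parity_cong: "(\<And>i. i < k \<Longrightarrow> P i = Q i) \<Longrightarrow> parity k P = parity k Q"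
  by (induction k) auto

lemma parity_False: "parity k (\<lambda>i. False) = False"
  by (induction k) auto

lemma parity_single: "parity k (\<lambda>i. i = q \<and> P i) = (q < k \<and> P q)"
  by (induction k) (auto simp: less_Suc_eq)

lemma parity_xor_bits: "parity n (\<lambda>i. z i \<and> bit (c XOR m) i) = (parity n (\<lambda>i. z i \<and> bit c i) \<noteq> parity n (\<lambda>i. z i \<and> bit m i))"
proof -
  have "parity n (\<lambda>i. z i \<and> bit (c XOR m) i) = parity n (\<lambda>i. (z i \<and> bit c i) \<noteq> (z i \<and> bit m i))"
    by (rule parity_cong) (auto simp: bit_xor_iff)
  then show ?thesis by (simp only: parity_xor)
qed

definition sgn_bool :: "bool \<Rightarrow> complex" where "sgn_bool b = (if b then -1 else 1)"

lemma sgn_bool_xor: "sgn_bool (a \<noteq> b) = sgn_bool a * sgn_bool b"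
  by (auto simp: sgn_bool_def)

lemma sgn_bool_square[simp]: "sgn_bool a * sgn_bool a = 1" "sgn_bool a * (sgn_bool a * x) = x"
  by (auto simp: sgn_bool_def)

lemma norm_sgn_bool: "cmod (sgn_bool b) = 1" by (simp add: sgn_bool_def)

lemma sgn_bool_nonzero: "sgn_bool b \<noteq> 0" by (simp add: sgn_bool_def)

lemma card_Suc_filter: "card {i. i < Suc k \<and> R i} = card {i. i < k \<and> R i} + (if R k then 1 else 0)"
proof -
  have "{i. i < Suc k \<and> R i} = {i. i < k \<and> R i} \<union> (if R k then {k} else {})"
    by (auto simp: less_Suc_eq)
  then show ?thesis by auto
qed

lemma minus_one_pow_card: "(-1::complex) ^ card {i. i < k \<and> R i} = sgn_bool (parity k R)"
  by (induction k) (auto simp: card_Suc_filter sgn_bool_def)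

section \<open>Complex matrices\<close>

lemma smult_smult_mat: "a \<cdot>\<^sub>m (b \<cdot>\<^sub>m A) = (a * b) \<cdot>\<^sub>m (A :: complex mat)"
  by (rule eq_matI) auto

lemma one_smult_mat[simp]: "1 \<cdot>\<^sub>m A = (A :: complex mat)"
  by (rule eq_matI) auto

lemma smult_mult_smult:
  fixes A B :: "complex mat"
  assumes "A \<in> carrier_mat n1 n2" "B \<in> carrier_mat n2 n3"
  shows "(a \<cdot>\<^sub>m A) * (b \<cdot>\<^sub>m B) = (a * b) \<cdot>\<^sub>m (A * B)"
proof -
  have "(a \<cdot>\<^sub>m A) * (b \<cdot>\<^sub>m B) = a \<cdot>\<^sub>m (A * (b \<cdot>\<^sub>m B))"
    by (rule mult_smult_assoc_mat[OF assms(1) smult_carrier_mat[OF assms(2)]])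
  also have "A * (b \<cdot>\<^sub>m B) = b \<cdot>\<^sub>m (A * B)" by (rule mult_smult_distrib[OF assms])
  finally show ?thesis by (simp add: smult_smult_mat)
qed

lemma mult_carrier_mat_sq[simp]: "A \<in> carrier_mat N N \<Longrightarrow> B \<in> carrier_mat N N \<Longrightarrow> A * B \<in> carrier_mat N N"
  by (rule mult_carrier_mat)

lemma mult_smult_sq[simp]:
  fixes A B :: "complex mat"
  shows "A \<in> carrier_mat N N \<Longrightarrow> B \<in> carrier_mat N N \<Longrightarrow> A * (k \<cdot>\<^sub>m B) = k \<cdot>\<^sub>m (A * B)"
    "A \<in> carrier_mat N N \<Longrightarrow> B \<in> carrier_mat N N \<Longrightarrow> (k \<cdot>\<^sub>m A) * B = k \<cdot>\<^sub>m (A * B)"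
  by (rule mult_smult_distrib, assumption+) (rule mult_smult_assoc_mat, assumption+)

lemma smult_eq_imp_eq_inverse_smult: "(k::complex) \<noteq> 0 \<Longrightarrow> k \<cdot>\<^sub>m A = B \<Longrightarrow> A = (1/k) \<cdot>\<^sub>m B"
  by (auto simp: smult_smult_mat)

lemma smult_mat_vec: "A \<in> carrier_mat nr nc \<Longrightarrow> v \<in> carrier_vec nc \<Longrightarrow> (k \<cdot>\<^sub>m A) *\<^sub>v v = k \<cdot>\<^sub>v (A *\<^sub>v (v :: complex vec))"
  by (rule eq_vecI) (auto simp: scalar_prod_def sum_distrib_left mult.assoc)

lemma sq_norm_smult: "sq_norm (c \<cdot>\<^sub>v v) = (cmod c)^2 * sq_norm v"
  by (simp add: sq_norm_def norm_mult power_mult_distrib sum_distrib_left)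

lemma adj_dims: "dim_row (adj U) = dim_col U" "dim_col (adj U) = dim_row U"
  unfolding adj_def by (rule dim_row_mat, rule dim_col_mat)

lemma adj_carrier[simp]: "U \<in> carrier_mat N N \<Longrightarrow> adj U \<in> carrier_mat N N"
  unfolding carrier_mat_def by (simp only: mem_Collect_eq adj_dims)

lemma adj_index: "i < dim_col A \<Longrightarrow> j < dim_row A \<Longrightarrow> adj A $$ (i,j) = cnj (A $$ (j,i))"
  unfolding adj_def by (simp only: index_mat split)

lemma adj_one: "adj (1\<^sub>m N) = (1\<^sub>m N :: complex mat)"
  by (rule eq_matI) (simp_all add: adj_index adj_dims)

lemma adj_mult:
  assumes A: "A \<in> carrier_mat N N" and B: "B \<in> carrier_mat N N"
  shows "adj (A * B) = adj B * adj A"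
proof (rule eq_matI)
  fix i j assume "i < dim_row (adj B * adj A)" "j < dim_col (adj B * adj A)"
  then have i: "i < N" and j: "j < N" using A B by (auto simp: adj_dims)
  have "adj (A * B) $$ (i,j) = cnj (\<Sum>k\<in>{0..<N}. A $$ (j,k) * B $$ (k,i))"
    using A B i j by (simp add: adj_index scalar_prod_def)
  also have "\<dots> = (\<Sum>k\<in>{0..<N}. adj B $$ (i,k) * adj A $$ (k,j))"
    using A B i j by (simp add: adj_index cnj_sum mult.commute)
  also have "\<dots> = (adj B * adj A) $$ (i,j)"
    using A B i j by (simp add: scalar_prod_def adj_dims)
  finally show "adj (A * B) $$ (i,j) = (adj B * adj A) $$ (i,j)" .
qed (use A B in \<open>auto simp: adj_dims\<close>)

lemma conj_smult_inverse:
  fixes V W P Q :: "complex mat"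
  assumes V: "V \<in> carrier_mat N N" and W: "W \<in> carrier_mat N N" and VW: "W * V = 1\<^sub>m N"
    and P: "P \<in> carrier_mat N N" and Q: "Q \<in> carrier_mat N N"
    and e: "V * P * W = c \<cdot>\<^sub>m Q"
  shows "P = c \<cdot>\<^sub>m (W * Q * V)"
proof -
  have "W * (V * P * W) * V = (W * V) * P * (W * V)"
    using V W P by (simp add: assoc_mult_mat[of _ N N _ N _ N])
  also have "\<dots> = P" using VW P by (simp add: left_mult_one_mat right_mult_one_mat)
  finally have "P = W * (c \<cdot>\<^sub>m Q) * V" using e by simp
  also have "\<dots> = c \<cdot>\<^sub>m (W * Q * V)"
    using V W Q by (simp add: mult_smult_distrib[of _ N N] mult_smult_assoc_mat[of _ N N])
  finally show ?thesis .
qed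

lemma conj_mult_distrib:
  fixes V W A B :: "complex mat"
  assumes V: "V \<in> carrier_mat N N" and W: "W \<in> carrier_mat N N" and VW: "V * W = 1\<^sub>m N"
    and A: "A \<in> carrier_mat N N" and B: "B \<in> carrier_mat N N"
  shows "W * (A * B) * V = (W * A * V) * (W * B * V)"
proof -
  have "(W * A * V) * (W * B * V) = W * A * (V * W) * B * V"
    using V W A B by (simp add: assoc_mult_mat[of _ N N _ N _ N])
  also have "\<dots> = W * A * B * V"
    using VW right_mult_one_mat[OF mult_carrier_mat[OF W A]] by (simp only:)
  also have "\<dots> = W * (A * B) * V"
    by (simp only: assoc_mult_mat[OF W A B])
  finally show ?thesis by simp
qed

lemma conj_commute_sign:
  fixes V W A B A' B' :: "complex mat"
  assumes V: "V \<in> carrier_mat N N" and W: "W \<in> carrier_mat N N" and VW: "V * W = 1\<^sub>m N"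
    and A: "A \<in> carrier_mat N N" and B: "B \<in> carrier_mat N N"
    and A': "A' \<in> carrier_mat N N" and B': "B' \<in> carrier_mat N N"
    and eA: "W * A * V = a \<cdot>\<^sub>m A'" and eB: "W * B * V = b \<cdot>\<^sub>m B'" and ab: "a * b \<noteq> 0"
    and comm: "A * B = s \<cdot>\<^sub>m (B * A)"
  shows "A' * B' = s \<cdot>\<^sub>m (B' * A')"
proof -
  have "(a * b) \<cdot>\<^sub>m (A' * B') = W * (A * B) * V"
    using conj_mult_distrib[OF V W VW A B] eA eB by (simp add: smult_mult_smult[OF A' B'])
  also have "\<dots> = s \<cdot>\<^sub>m (W * (B * A) * V)"
    using V W A B by (simp add: comm mult_smult_sq[where N=N])
  also have "W * (B * A) * V = (a * b) \<cdot>\<^sub>m (B' * A')"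
    using conj_mult_distrib[OF V W VW B A] eA eB by (simp add: smult_mult_smult[OF B' A'] mult.commute)
  finally have "(a * b) \<cdot>\<^sub>m (A' * B') = (a * b) \<cdot>\<^sub>m (s \<cdot>\<^sub>m (B' * A'))"
    by (simp add: smult_smult_mat mult.commute)
  then have "(1 / (a * b)) \<cdot>\<^sub>m ((a * b) \<cdot>\<^sub>m (A' * B')) = (1 / (a * b)) \<cdot>\<^sub>m ((a * b) \<cdot>\<^sub>m (s \<cdot>\<^sub>m (B' * A')))"
    by simp
  then show ?thesis using ab by (simp add: smult_smult_mat)
qed

section \<open>Pauli matrices\<close>

lemma ptimes_comm: "ptimes p q = ptimes q p"
  by (auto simp: ptimes_def)

lemma ptimes_self: "ptimes p p = pid"
  by (auto simp: ptimes_def pid_def)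

lemma ptimes_pid[simp]: "ptimes pid p = p" "ptimes p pid = p"
  by (auto simp: ptimes_def pid_def)

lemma ptimes_eq_pid: "ptimes p q = pid \<Longrightarrow> p = q"
  by (auto simp: ptimes_def pid_def prod_eq_iff fun_eq_iff)

lemma pauli_on_ptimes: "pauli_on n p \<Longrightarrow> pauli_on n q \<Longrightarrow> pauli_on n (ptimes p q)"
  by (auto simp: pauli_on_def ptimes_def)

lemma pauli_on_pid: "pauli_on n pid"
  by (auto simp: pauli_on_def pid_def)

lemma finite_pauli_on: "finite {p. pauli_on n p}"
proof (rule finite_imageD)
  let ?f = "\<lambda>p::pauli. ({i. fst p i}, {i. snd p i})"
  show "inj_on ?f {p. pauli_on n p}"
    by (rule inj_onI) (auto simp: prod_eq_iff fun_eq_iff)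
  have "?f ` {p. pauli_on n p} \<subseteq> Pow {..<n} \<times> Pow {..<n}"
    by (auto simp: pauli_on_def) (meson not_less)+
  then show "finite (?f ` {p. pauli_on n p})" by (rule finite_subset) auto
qed

definition pauli_phase :: "nat \<Rightarrow> pauli \<Rightarrow> complex" where
  "pauli_phase n p = \<i> ^ card {q. q < n \<and> fst p q \<and> snd p q}"

lemma pauli_phase_square: "pauli_phase n p * pauli_phase n p = sgn_bool (parity n (\<lambda>q. fst p q \<and> snd p q))"
proof -
  have "pauli_phase n p * pauli_phase n p = (\<i>^2) ^ card {q. q < n \<and> fst p q \<and> snd p q}"
    unfolding pauli_phase_def by (simp add: power_mult_distrib[symmetric] power_mult[symmetric] mult.commute)
  also have "\<dots> = sgn_bool (parity n (\<lambda>q. fst p q \<and> snd p q))" using minus_one_pow_card by simp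
  finally show ?thesis .
qed

lemma pauli_phase_nonzero: "pauli_phase n p \<noteq> 0" by (simp add: pauli_phase_def)

lemma norm_pauli_phase: "cmod (pauli_phase n p) = 1" by (simp add: pauli_phase_def norm_power)

lemma pauli_phase_pid: "pauli_phase n pid = 1" by (simp add: pauli_phase_def pid_def)

lemma pmat_index:
  assumes "a < 2^n" "b < 2^n"
  shows "pmat n p $$ (a,b) = (if a = b XOR bits_nat n (fst p) then pauli_phase n p * sgn_bool (parity n (\<lambda>q. snd p q \<and> bit b q)) else 0)"
proof -
  have eq: "(\<forall>q<n. bit a q \<longleftrightarrow> (bit b q \<noteq> fst p q)) \<longleftrightarrow> a = b XOR bits_nat n (fst p)"
  proof
    assume "\<forall>q<n. bit a q \<longleftrightarrow> (bit b q \<noteq> fst p q)"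
    then show "a = b XOR bits_nat n (fst p)"
      by (intro nat_eq_by_low_bits[OF assms(1) xor_less_pow2[OF assms(2) bits_nat_less]]) (auto simp: bit_xor_iff bit_bits_nat)
  qed (auto simp: bit_xor_iff bit_bits_nat)
  show ?thesis using assms unfolding pmat_def
    by (simp only: index_mat(1) split eq minus_one_pow_card pauli_phase_def)
qed

lemma pmat_carrier[simp]: "pmat n p \<in> carrier_mat (2^n) (2^n)"
  by (simp add: pmat_def)

lemma pmat_dims[simp]: "dim_row (pmat n p) = 2^n" "dim_col (pmat n p) = 2^n"
  by (simp_all add: pmat_def)

lemma pmat_row_sum:
  assumes a: "a < 2^n"
  shows "(\<Sum>b\<in>{0..<2^n}. pmat n p $$ (a,b) * f b) =
    pauli_phase n p * sgn_bool (parity n (\<lambda>q. snd p q \<and> bit (a XOR bits_nat n (fst p)) q))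
      * f (a XOR bits_nat n (fst p))"
proof -
  let ?m = "bits_nat n (fst p)"
  have "(\<Sum>b\<in>{0..<2^n}. pmat n p $$ (a,b) * f b) =
      (\<Sum>b\<in>{0..<2^n}. if b = a XOR ?m
         then pauli_phase n p * sgn_bool (parity n (\<lambda>q. snd p q \<and> bit b q)) * f b else 0)"
  proof (rule sum.cong[OF refl])
    fix b assume "b \<in> {0..<(2::nat)^n}"
    moreover have "a = b XOR ?m \<longleftrightarrow> b = a XOR ?m" by (auto simp: xor_xor_cancel)
    ultimately show "pmat n p $$ (a,b) * f b = (if b = a XOR ?m
         then pauli_phase n p * sgn_bool (parity n (\<lambda>q. snd p q \<and> bit b q)) * f b else 0)"
      using a by (simp add: pmat_index)
  qed
  also have "\<dots> = pauli_phase n p * sgn_bool (parity n (\<lambda>q. snd p q \<and> bit (a XOR ?m) q)) * f (a XOR ?m)"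
    using xor_less_pow2[OF a bits_nat_less] by (simp add: sum.delta)
  finally show ?thesis .
qed

lemma pmat_col_sum:
  assumes c: "c < 2^n"
  shows "(\<Sum>b\<in>{0..<2^n}. f b * pmat n q $$ (b,c)) =
    f (c XOR bits_nat n (fst q)) * (pauli_phase n q * sgn_bool (parity n (\<lambda>i. snd q i \<and> bit c i)))"
proof -
  let ?m = "bits_nat n (fst q)"
  have "(\<Sum>b\<in>{0..<2^n}. f b * pmat n q $$ (b,c)) =
      (\<Sum>b\<in>{0..<2^n}. if b = c XOR ?m
         then f b * (pauli_phase n q * sgn_bool (parity n (\<lambda>i. snd q i \<and> bit c i))) else 0)"
  proof (rule sum.cong[OF refl])
    fix b assume "b \<in> {0..<(2::nat)^n}"
    moreover have "b = c XOR ?m \<longleftrightarrow> c = b XOR ?m" by (auto simp: xor_xor_cancel)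
    ultimately show "f b * pmat n q $$ (b,c) = (if b = c XOR ?m
         then f b * (pauli_phase n q * sgn_bool (parity n (\<lambda>i. snd q i \<and> bit c i))) else 0)"
      using c by (simp add: pmat_index)
  qed
  also have "\<dots> = f (c XOR ?m) * (pauli_phase n q * sgn_bool (parity n (\<lambda>i. snd q i \<and> bit c i)))"
    using xor_less_pow2[OF c bits_nat_less] by (simp add: sum.delta)
  finally show ?thesis .
qed

definition mult_phase :: "nat \<Rightarrow> pauli \<Rightarrow> pauli \<Rightarrow> complex" where
  "mult_phase n p q = pauli_phase n p * pauli_phase n q * sgn_bool (parity n (\<lambda>i. snd p i \<and> fst q i)) / pauli_phase n (ptimes p q)"

lemma norm_mult_phase: "cmod (mult_phase n p q) = 1"
  by (simp add: mult_phase_def norm_mult norm_divide norm_pauli_phase norm_sgn_bool)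

lemma mult_phase_nonzero: "mult_phase n p q \<noteq> 0"
  using norm_mult_phase[of n p q] by auto

lemma pmat_mult: "pmat n p * pmat n q = mult_phase n p q \<cdot>\<^sub>m pmat n (ptimes p q)"
proof (rule eq_matI)
  fix a c
  assume "a < dim_row (mult_phase n p q \<cdot>\<^sub>m pmat n (ptimes p q))"
    and "c < dim_col (mult_phase n p q \<cdot>\<^sub>m pmat n (ptimes p q))"
  then have a: "a < 2^n" and c: "c < 2^n" by auto
  define mq where "mq = bits_nat n (fst q)"
  have cq: "c XOR mq < 2^n" unfolding mq_def by (intro xor_less_pow2 c bits_nat_less)
  have "(pmat n p * pmat n q) $$ (a,c) = (\<Sum>b\<in>{0..<2^n}. pmat n p $$ (a,b) * pmat n q $$ (b,c))"
    using a c by (simp add: scalar_prod_def)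
  also have "\<dots> = pmat n p $$ (a, c XOR mq) * (pauli_phase n q * sgn_bool (parity n (\<lambda>i. snd q i \<and> bit c i)))"
    unfolding mq_def by (rule pmat_col_sum[OF c])
  also have "\<dots> = (if a = c XOR bits_nat n (fst (ptimes p q)) then
        pauli_phase n p * pauli_phase n q * sgn_bool (parity n (\<lambda>i. snd p i \<and> fst q i))
        * sgn_bool (parity n (\<lambda>i. snd (ptimes p q) i \<and> bit c i)) else 0)"
  proof -
    have x: "(c XOR mq) XOR bits_nat n (fst p) = c XOR bits_nat n (fst (ptimes p q))"
      by (rule bit_eqI) (auto simp: bit_xor_iff bit_bits_nat mq_def ptimes_def)
    have "parity n (\<lambda>i. snd p i \<and> bit (c XOR mq) i)
        = (parity n (\<lambda>i. snd p i \<and> bit c i) \<noteq> parity n (\<lambda>i. snd p i \<and> fst q i))"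
      unfolding parity_xor_bits mq_def by (metis (no_types, lifting) bit_bits_nat parity_cong)
    then have e1: "sgn_bool (parity n (\<lambda>i. snd p i \<and> bit (c XOR mq) i))
        = sgn_bool (parity n (\<lambda>i. snd p i \<and> bit c i)) * sgn_bool (parity n (\<lambda>i. snd p i \<and> fst q i))"
      by (simp only: sgn_bool_xor)
    have "parity n (\<lambda>i. snd (ptimes p q) i \<and> bit c i)
        = (parity n (\<lambda>i. snd p i \<and> bit c i) \<noteq> parity n (\<lambda>i. snd q i \<and> bit c i))"
      by (subst parity_xor[symmetric], rule parity_cong) (auto simp: ptimes_def)
    then have e2: "sgn_bool (parity n (\<lambda>i. snd (ptimes p q) i \<and> bit c i))
        = sgn_bool (parity n (\<lambda>i. snd p i \<and> bit c i)) * sgn_bool (parity n (\<lambda>i. snd q i \<and> bit c i))"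
      by (simp only: sgn_bool_xor)
    show ?thesis
      by (simp only: pmat_index[OF a cq] x e1 e2) (simp add: algebra_simps)
  qed
  also have "\<dots> = (mult_phase n p q \<cdot>\<^sub>m pmat n (ptimes p q)) $$ (a,c)"
    using a c by (simp add: pmat_index mult_phase_def pauli_phase_nonzero)
  finally show "(pmat n p * pmat n q) $$ (a,c) = (mult_phase n p q \<cdot>\<^sub>m pmat n (ptimes p q)) $$ (a,c)" .
qed auto

lemma pmat_pid: "pmat n pid = 1\<^sub>m (2^n)"
  by (rule eq_matI) (auto simp: pmat_index pauli_phase_def pid_def bits_nat_False parity_False sgn_bool_def)

lemma hpmat_Pair: "hpmat n (s,p) = sgn_bool s \<cdot>\<^sub>m pmat n p"
  by (simp add: hpmat_def sgn_bool_def)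

lemma hpmat_sgn_bool: "hpmat n S = sgn_bool (fst S) \<cdot>\<^sub>m pmat n (snd S)"
  by (simp add: hpmat_def sgn_bool_def)

lemma pmat_square:
  "pmat n p * pmat n p = 1\<^sub>m (2^n)"
  "A \<in> carrier_mat (2^n) nc \<Longrightarrow> pmat n p * (pmat n p * A) = A"
proof -
  have "mult_phase n p p = 1"
  proof -
    have "parity n (\<lambda>i. snd p i \<and> fst p i) = parity n (\<lambda>q. fst p q \<and> snd p q)"
      by (rule parity_cong) auto
    then show ?thesis
      unfolding mult_phase_def ptimes_self pauli_phase_pid
      by (simp add: pauli_phase_square[simplified mult.assoc] mult.assoc)
  qed
  then show sq: "pmat n p * pmat n p = 1\<^sub>m (2^n)" by (simp add: pmat_mult ptimes_self pmat_pid)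
  assume A: "A \<in> carrier_mat (2^n) nc"
  have "pmat n p * (pmat n p * A) = (pmat n p * pmat n p) * A"
    by (rule assoc_mult_mat[symmetric, OF pmat_carrier pmat_carrier A])
  then show "pmat n p * (pmat n p * A) = A" using A by (simp add: sq)
qed

definition anticomm :: "nat \<Rightarrow> pauli \<Rightarrow> pauli \<Rightarrow> bool" where
  "anticomm n p q = parity n (\<lambda>i. (fst p i \<and> snd q i) \<noteq> (snd p i \<and> fst q i))"

lemma anticomm_sym: "anticomm n p q = anticomm n q p"
  unfolding anticomm_def by (rule parity_cong) auto

lemma anticomm_ptimes: "anticomm n p (ptimes q r) = (anticomm n p q \<noteq> anticomm n p r)"
proof -
  have "anticomm n p (ptimes q r) = parity n (\<lambda>i. ((fst p i \<and> snd q i) \<noteq> (snd p i \<and> fst q i)) \<noteq> ((fst p i \<and> snd r i) \<noteq> (snd p i \<and> fst r i)))"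
    unfolding anticomm_def by (rule parity_cong) (auto simp: ptimes_def)
  then show ?thesis unfolding anticomm_def by (simp only: parity_xor)
qed

lemma anticomm_pid: "anticomm n p pid = False"
  unfolding anticomm_def pid_def by (simp add: parity_False)

lemma anticomm_pX: "anticomm n (pX q) b = (q < n \<and> snd b q)"
proof -
  have "anticomm n (pX q) b = parity n (\<lambda>i. i = q \<and> snd b i)"
    unfolding anticomm_def pX_def by (rule parity_cong) auto
  then show ?thesis by (simp add: parity_single)
qed

lemma anticomm_pZ: "anticomm n (pZ q) b = (q < n \<and> fst b q)"
proof -
  have "anticomm n (pZ q) b = parity n (\<lambda>i. i = q \<and> fst b i)"
    unfolding anticomm_def pZ_def by (rule parity_cong) auto
  then show ?thesis by (simp add: parity_single)
qed

lemma anticomm_none_imp_pid: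
  assumes "pauli_on n b" "\<forall>E. pauli_on n E \<longrightarrow> \<not> anticomm n E b"
  shows "b = pid"
proof -
  have "\<not> snd b q \<and> \<not> fst b q" for q
  proof (cases "q < n")
    case True
    have "pauli_on n (pX q)" "pauli_on n (pZ q)" using True by (auto simp: pauli_on_def pX_def pZ_def)
    then have "\<not> anticomm n (pX q) b" "\<not> anticomm n (pZ q) b" using assms(2) by blast+
    then show ?thesis using anticomm_pX[of n q b] anticomm_pZ[of n q b] True by simp
  next
    case False then show ?thesis using assms(1) by (auto simp: pauli_on_def)
  qed
  then show ?thesis by (auto simp: pid_def prod_eq_iff fun_eq_iff)
qed

lemma mult_phase_swap: "mult_phase n p q = sgn_bool (anticomm n p q) * mult_phase n q p"
proof -
  have "parity n (\<lambda>i. fst p i \<and> snd q i) = parity n (\<lambda>i. snd q i \<and> fst p i)"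
    by (rule parity_cong) auto
  then have "anticomm n p q = (parity n (\<lambda>i. snd q i \<and> fst p i) \<noteq> parity n (\<lambda>i. snd p i \<and> fst q i))"
    unfolding anticomm_def by (simp only: parity_xor)
  then have "sgn_bool (anticomm n p q) = sgn_bool (parity n (\<lambda>i. snd q i \<and> fst p i)) * sgn_bool (parity n (\<lambda>i. snd p i \<and> fst q i))"
    by (simp only: sgn_bool_xor)
  then show ?thesis
    unfolding mult_phase_def by (simp add: ptimes_comm[of q p] algebra_simps sgn_bool_square)
qed

lemma pmat_commute_sign: "pmat n p * pmat n q = sgn_bool (anticomm n p q) \<cdot>\<^sub>m (pmat n q * pmat n p)"
  by (simp add: pmat_mult mult_phase_swap[of n p q] ptimes_comm[of q p] smult_smult_mat)

lemma sgn_bool_smult_inj: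
  assumes "sgn_bool a \<cdot>\<^sub>m (pmat n q * pmat n p) = sgn_bool b \<cdot>\<^sub>m (pmat n q * pmat n p)"
  shows "a = b"
proof -
  have inv: "(c \<cdot>\<^sub>m (pmat n q * pmat n p)) * (pmat n p * pmat n q) = c \<cdot>\<^sub>m 1\<^sub>m (2^n)" for c
  proof -
    have "(pmat n q * pmat n p) * (pmat n p * pmat n q) = pmat n q * (pmat n p * (pmat n p * pmat n q))"
      by (rule assoc_mult_mat[OF pmat_carrier pmat_carrier mult_carrier_mat[OF pmat_carrier pmat_carrier]])
    then show ?thesis by (simp add: mult_smult_sq[where N="2^n"] pmat_square(2)[OF pmat_carrier] pmat_square(1))
  qed
  have "sgn_bool a \<cdot>\<^sub>m 1\<^sub>m (2^n) = (sgn_bool b \<cdot>\<^sub>m 1\<^sub>m (2^n) :: complex mat)"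
    using inv[of "sgn_bool a"] inv[of "sgn_bool b"] assms by simp
  then have "(sgn_bool a \<cdot>\<^sub>m 1\<^sub>m (2^n)) $$ (0,0) = (sgn_bool b \<cdot>\<^sub>m 1\<^sub>m (2^n) :: complex mat) $$ (0,0)"
    by simp
  then show ?thesis by (auto simp: sgn_bool_def split: if_splits)
qed

lemma pmat_scalar_imp_no_X:
  assumes scalar: "pmat n r = c \<cdot>\<^sub>m 1\<^sub>m (2^n)" and q: "q < n"
  shows "\<not> fst r q"
proof
  assume "fst r q"
  let ?m = "bits_nat n (fst r)"
  have "?m \<noteq> 0"
  proof
    assume "?m = 0"
    then have "bit ?m q = bit (0::nat) q" by simp
    then show False using \<open>fst r q\<close> q by (simp add: bit_bits_nat)
  qed
  then have "pmat n r $$ (?m, 0) = 0" using scalar bits_nat_less[of n "fst r"] by simp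
  moreover have "pmat n r $$ (?m, 0) = pauli_phase n r * sgn_bool (parity n (\<lambda>i. snd r i \<and> bit (0::nat) i))"
    using pmat_index[OF bits_nat_less, of 0 n r] by simp
  ultimately show False by (simp add: pauli_phase_nonzero sgn_bool_nonzero)
qed

lemma pmat_scalar_imp_no_Z:
  assumes scalar: "pmat n r = c \<cdot>\<^sub>m 1\<^sub>m (2^n)" and q: "q < n"
  shows "\<not> snd r q"
proof
  assume zq: "snd r q"
  have "bits_nat n (fst r) = 0"
    by (rule bit_eqI) (auto simp: bit_bits_nat dest: pmat_scalar_imp_no_X[OF scalar])
  then have diag: "pmat n r $$ (a,a) = pauli_phase n r * sgn_bool (parity n (\<lambda>i. snd r i \<and> bit a i))"
    if "a < 2^n" for a
    using that by (simp add: pmat_index)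
  have q2: "(2::nat)^q < 2^n" using q by simp
  have "parity n (\<lambda>i. snd r i \<and> bit ((2::nat)^q) i) = parity n (\<lambda>i. i = q \<and> snd r i)"
    by (rule parity_cong) (auto simp: bit_exp_iff)
  also have "\<dots> = True" using q zq by (simp only: parity_single) simp
  finally have "pmat n r $$ (2^q, 2^q) = - pauli_phase n r"
    using diag[OF q2] by (simp add: sgn_bool_def)
  moreover have "pmat n r $$ (0, 0) = pauli_phase n r"
    using diag[of 0] by (simp add: parity_False sgn_bool_def)
  moreover have "pmat n r $$ (2^q, 2^q) = pmat n r $$ (0, 0)" using scalar q2 by simp
  ultimately have "- pauli_phase n r = pauli_phase n r" by simp
  then show False using pauli_phase_nonzero[of n r] by (simp add: eq_neg_iff_add_eq_0)
qed

lemma pmat_scalar_imp_pid: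
  assumes "pauli_on n r" "pmat n r = c \<cdot>\<^sub>m 1\<^sub>m (2^n)"
  shows "r = pid"
  using assms(1) pmat_scalar_imp_no_X[OF assms(2)] pmat_scalar_imp_no_Z[OF assms(2)]
  unfolding pauli_on_def pid_def by (auto simp: prod_eq_iff fun_eq_iff) (meson not_less)+

lemma signed_pmat_inj:
  assumes "pauli_on n p" "pauli_on n p'" "sgn_bool s \<cdot>\<^sub>m pmat n p = sgn_bool s' \<cdot>\<^sub>m pmat n p'"
  shows "p = p'"
proof -
  have "(sgn_bool s \<cdot>\<^sub>m pmat n p) * pmat n p' = (sgn_bool s' \<cdot>\<^sub>m pmat n p') * pmat n p'"
    using assms(3) by simp
  moreover have "(sgn_bool s \<cdot>\<^sub>m pmat n p) * pmat n p' = (sgn_bool s * mult_phase n p p') \<cdot>\<^sub>m pmat n (ptimes p p')"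
    by (simp add: mult_smult_assoc_mat[OF pmat_carrier pmat_carrier] pmat_mult smult_smult_mat)
  moreover have "(sgn_bool s' \<cdot>\<^sub>m pmat n p') * pmat n p' = sgn_bool s' \<cdot>\<^sub>m 1\<^sub>m (2^n)"
    by (simp add: mult_smult_assoc_mat[OF pmat_carrier pmat_carrier] pmat_square)
  ultimately have "(sgn_bool s * mult_phase n p p') \<cdot>\<^sub>m pmat n (ptimes p p') = sgn_bool s' \<cdot>\<^sub>m 1\<^sub>m (2^n)"
    by simp
  then have "pmat n (ptimes p p') = (1 / (sgn_bool s * mult_phase n p p')) \<cdot>\<^sub>m (sgn_bool s' \<cdot>\<^sub>m 1\<^sub>m (2^n))"
    by (intro smult_eq_imp_eq_inverse_smult) (auto simp: sgn_bool_nonzero mult_phase_nonzero)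
  then have "pmat n (ptimes p p') = (1 / (sgn_bool s * mult_phase n p p') * sgn_bool s') \<cdot>\<^sub>m 1\<^sub>m (2^n)"
    by (simp add: smult_smult_mat)
  then have "ptimes p p' = pid"
    by (rule pmat_scalar_imp_pid[OF pauli_on_ptimes[OF assms(1,2)]])
  then show ?thesis by (rule ptimes_eq_pid)
qed

lemma sq_norm_pmat_mult_vec:
  assumes v: "v \<in> carrier_vec (2^n)"
  shows "sq_norm (pmat n p *\<^sub>v v) = sq_norm v"
proof -
  define m where "m = bits_nat n (fst p)"
  have m: "m < 2^n" unfolding m_def by (rule bits_nat_less)
  have "cmod ((pmat n p *\<^sub>v v) $ a) = cmod (v $ (a XOR m))" if a: "a < 2^n" for a
  proof -
    have "(pmat n p *\<^sub>v v) $ a = (\<Sum>b\<in>{0..<2^n}. pmat n p $$ (a,b) * v $ b)"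
      using a v by (simp add: scalar_prod_def)
    then show ?thesis
      unfolding m_def pmat_row_sum[OF a] by (simp add: norm_mult norm_pauli_phase norm_sgn_bool)
  qed
  then have "sq_norm (pmat n p *\<^sub>v v) = (\<Sum>a<2^n. (cmod (v $ (a XOR m)))^2)"
    unfolding sq_norm_def by (intro sum.cong) auto
  also have "\<dots> = (\<Sum>a<2^n. (cmod (v $ a))^2)"
    by (rule sum.reindex_bij_witness[where i="\<lambda>a. a XOR m" and j="\<lambda>a. a XOR m"])
       (auto simp: xor_xor_cancel intro: xor_less_pow2 m)
  also have "\<dots> = sq_norm v" using v by (simp add: sq_norm_def)
  finally show ?thesis .
qed

section \<open>Clifford unitaries\<close>

lemma clifford_unitary:
  assumes "is_clifford n U"
  shows "U \<in> carrier_mat (2^n) (2^n)" "adj U \<in> carrier_mat (2^n) (2^n)"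
    "adj U * U = 1\<^sub>m (2^n)" "U * adj U = 1\<^sub>m (2^n)"
  using assms by (auto simp: is_clifford_def)

lemma clifford_cancel:
  assumes "is_clifford n U" "X \<in> carrier_mat (2^n) m"
  shows "adj U * (U * X) = X" "U * (adj U * X) = X"
proof -
  note cu = clifford_unitary[OF assms(1)]
  have "adj U * (U * X) = (adj U * U) * X" by (rule assoc_mult_mat[symmetric, OF cu(2) cu(1) assms(2)])
  then show "adj U * (U * X) = X" using cu assms(2) by (simp only: cu(3) left_mult_one_mat)
  have "U * (adj U * X) = (U * adj U) * X" by (rule assoc_mult_mat[symmetric, OF cu(1) cu(2) assms(2)])
  then show "U * (adj U * X) = X" using cu assms(2) by (simp only: cu(4) left_mult_one_mat)
qed

definition conj_fwd :: "nat \<Rightarrow> complex mat \<Rightarrow> pauli \<Rightarrow> pauli" where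
  "conj_fwd n U p = snd (SOME S. pauli_on n (snd S) \<and> U * pmat n p * adj U = hpmat n S)"

lemma conj_fwd_spec:
  assumes "is_clifford n U" "pauli_on n p"
  shows "pauli_on n (conj_fwd n U p) \<and> (\<exists>s. U * pmat n p * adj U = sgn_bool s \<cdot>\<^sub>m pmat n (conj_fwd n U p))"
proof -
  have "\<exists>S. pauli_on n (snd S) \<and> U * pmat n p * adj U = hpmat n S"
    using assms unfolding is_clifford_def by blast
  then have "pauli_on n (snd (SOME S. pauli_on n (snd S) \<and> U * pmat n p * adj U = hpmat n S)) \<and>
     U * pmat n p * adj U = hpmat n (SOME S. pauli_on n (snd S) \<and> U * pmat n p * adj U = hpmat n S)"
    by (rule someI_ex)
  then show ?thesis unfolding conj_fwd_def hpmat_sgn_bool by blast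
qed

lemma conj_fwd_unique:
  assumes "is_clifford n U" "pauli_on n p" "pauli_on n q" "U * pmat n p * adj U = sgn_bool s \<cdot>\<^sub>m pmat n q"
  shows "conj_fwd n U p = q"
proof -
  obtain s' where "U * pmat n p * adj U = sgn_bool s' \<cdot>\<^sub>m pmat n (conj_fwd n U p)" and f: "pauli_on n (conj_fwd n U p)"
    using conj_fwd_spec[OF assms(1,2)] by blast
  then have "sgn_bool s' \<cdot>\<^sub>m pmat n (conj_fwd n U p) = sgn_bool s \<cdot>\<^sub>m pmat n q" using assms(4) by simp
  then show ?thesis by (rule signed_pmat_inj[OF f assms(3)])
qed

lemma conj_fwd_inverse:
  assumes "is_clifford n U" "U * pmat n p * adj U = c \<cdot>\<^sub>m pmat n q"
  shows "pmat n p = c \<cdot>\<^sub>m (adj U * pmat n q * U)"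
  using conj_smult_inverse[of U "2^n" "adj U" "pmat n p" "pmat n q" c] clifford_unitary[OF assms(1)] assms(2) by simp

lemma inj_on_conj_fwd: assumes "is_clifford n U" shows "inj_on (conj_fwd n U) {p. pauli_on n p}"
proof
  fix p p' assume p: "p \<in> {p. pauli_on n p}" and p': "p' \<in> {p. pauli_on n p}" and eq: "conj_fwd n U p = conj_fwd n U p'"
  obtain s where s: "U * pmat n p * adj U = sgn_bool s \<cdot>\<^sub>m pmat n (conj_fwd n U p)"
    using conj_fwd_spec[OF assms] p by blast
  obtain s' where s'0: "U * pmat n p' * adj U = sgn_bool s' \<cdot>\<^sub>m pmat n (conj_fwd n U p')"
    using conj_fwd_spec[OF assms, of p'] p' by auto
  then have s': "U * pmat n p' * adj U = sgn_bool s' \<cdot>\<^sub>m pmat n (conj_fwd n U p)" using eq by simp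
  have "pmat n p = sgn_bool s \<cdot>\<^sub>m (adj U * pmat n (conj_fwd n U p) * U)" by (rule conj_fwd_inverse[OF assms s])
  moreover have "pmat n p' = sgn_bool s' \<cdot>\<^sub>m (adj U * pmat n (conj_fwd n U p) * U)" by (rule conj_fwd_inverse[OF assms s'])
  ultimately have "sgn_bool s \<cdot>\<^sub>m pmat n p = sgn_bool s' \<cdot>\<^sub>m pmat n p'"
    by (simp add: smult_smult_mat)
  then show "p = p'" using signed_pmat_inj p p' by blast
qed

text \<open>\<^const>\<open>is_clifford\<close> only asks U P (adj U) to be a Pauli up to sign; that (adj U) P U is
  one as well follows because P \<mapsto> U P (adj U) is injective on the finitely many Paulis.\<close>
lemma conjugate_pauli_exists:
  assumes "is_clifford n U" "pauli_on n q"
  shows "\<exists>p s. pauli_on n p \<and> adj U * pmat n q * U = sgn_bool s \<cdot>\<^sub>m pmat n p"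
proof -
  have "conj_fwd n U ` {p. pauli_on n p} \<subseteq> {p. pauli_on n p}"
    using conj_fwd_spec[OF assms(1)] by auto
  then have "conj_fwd n U ` {p. pauli_on n p} = {p. pauli_on n p}"
    by (rule endo_inj_surj[OF finite_pauli_on _ inj_on_conj_fwd[OF assms(1)]])
  then have "q \<in> conj_fwd n U ` {p. pauli_on n p}" using assms(2) by simp
  then obtain p where p: "pauli_on n p" "q = conj_fwd n U p" by blast
  then obtain s where "U * pmat n p * adj U = sgn_bool s \<cdot>\<^sub>m pmat n q"
    using conj_fwd_spec[OF assms(1) p(1)] by blast
  then have "pmat n p = sgn_bool s \<cdot>\<^sub>m (adj U * pmat n q * U)" by (rule conj_fwd_inverse[OF assms(1)])
  then have "adj U * pmat n q * U = sgn_bool s \<cdot>\<^sub>m pmat n p"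
    by (simp add: smult_smult_mat)
  then show ?thesis using p by blast
qed

lemma conjP_spec:
  assumes "is_clifford n U" "pauli_on n q"
  shows "pauli_on n (conjP n U q) \<and> (\<exists>s. adj U * pmat n q * U = sgn_bool s \<cdot>\<^sub>m pmat n (conjP n U q))"
proof -
  obtain p s where ps: "pauli_on n p" "adj U * pmat n q * U = sgn_bool s \<cdot>\<^sub>m pmat n p"
    using conjugate_pauli_exists[OF assms] by blast
  have "pauli_on n (conjP n U q) \<and> (\<exists>s. adj U * pmat n q * U = hpmat n (s, conjP n U q))"
    unfolding conjP_def
  proof (rule theI[of _ p])
    show "pauli_on n p \<and> (\<exists>s. adj U * pmat n q * U = hpmat n (s, p))"
      using ps by (auto simp: hpmat_Pair)
  next
    fix x assume "pauli_on n x \<and> (\<exists>s. adj U * pmat n q * U = hpmat n (s, x))"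
    then obtain s' where x: "pauli_on n x" "adj U * pmat n q * U = sgn_bool s' \<cdot>\<^sub>m pmat n x"
      by (auto simp: hpmat_Pair)
    then have "sgn_bool s' \<cdot>\<^sub>m pmat n x = sgn_bool s \<cdot>\<^sub>m pmat n p" using ps by simp
    then show "x = p" by (rule signed_pmat_inj[OF x(1) ps(1)])
  qed
  then show ?thesis by (simp add: hpmat_Pair)
qed

lemma conjP_unique:
  assumes "is_clifford n U" "pauli_on n q" "pauli_on n p" "adj U * pmat n q * U = sgn_bool s \<cdot>\<^sub>m pmat n p"
  shows "conjP n U q = p"
proof -
  obtain s' where x: "pauli_on n (conjP n U q)" "adj U * pmat n q * U = sgn_bool s' \<cdot>\<^sub>m pmat n (conjP n U q)"
    using conjP_spec[OF assms(1,2)] by blast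
  then have "sgn_bool s' \<cdot>\<^sub>m pmat n (conjP n U q) = sgn_bool s \<cdot>\<^sub>m pmat n p" using assms(4) by simp
  then show ?thesis by (rule signed_pmat_inj[OF x(1) assms(3)])
qed

lemma anticomm_conj_fwd:
  assumes U: "is_clifford n U" and p: "pauli_on n p" and q: "pauli_on n q"
  shows "anticomm n (conj_fwd n U p) q = anticomm n p (conjP n U q)"
proof -
  note cu = clifford_unitary[OF U]
  obtain a where fwd: "U * pmat n p * adj U = sgn_bool a \<cdot>\<^sub>m pmat n (conj_fwd n U p)"
    using conj_fwd_spec[OF U p] by blast
  have ha: "adj U * pmat n (conj_fwd n U p) * U = sgn_bool a \<cdot>\<^sub>m pmat n p"
    using conj_fwd_inverse[OF U fwd] by (simp add: smult_smult_mat)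
  obtain b where hb: "adj U * pmat n q * U = sgn_bool b \<cdot>\<^sub>m pmat n (conjP n U q)"
    using conjP_spec[OF U q] by blast
  have "pmat n p * pmat n (conjP n U q)
      = sgn_bool (anticomm n (conj_fwd n U p) q) \<cdot>\<^sub>m (pmat n (conjP n U q) * pmat n p)"
    by (rule conj_commute_sign[OF cu(1,2,4) pmat_carrier pmat_carrier pmat_carrier pmat_carrier
          ha hb _ pmat_commute_sign]) (simp add: sgn_bool_nonzero)
  moreover have "pmat n p * pmat n (conjP n U q)
      = sgn_bool (anticomm n p (conjP n U q)) \<cdot>\<^sub>m (pmat n (conjP n U q) * pmat n p)"
    by (rule pmat_commute_sign)
  ultimately show ?thesis by (metis sgn_bool_smult_inj)
qed

lemma clifford_one: "is_clifford n (1\<^sub>m (2^n))"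
proof -
  have "\<exists>S. pauli_on n (snd S) \<and> 1\<^sub>m (2^n) * pmat n p * adj (1\<^sub>m (2^n)) = hpmat n S" if "pauli_on n p" for p
    using that by (intro exI[of _ "(False,p)"]) (simp add: hpmat_Pair sgn_bool_def adj_one)
  then show ?thesis unfolding is_clifford_def adj_one by simp
qed

lemma conj_mult_pmat:
  assumes U: "is_clifford n U" and V: "is_clifford n V" and p: "pauli_on n p"
  shows "\<exists>s. U * V * pmat n p * adj (U * V) = sgn_bool s \<cdot>\<^sub>m pmat n (conj_fwd n U (conj_fwd n V p))"
proof -
  note cu = clifford_unitary[OF U] and cv = clifford_unitary[OF V]
  obtain s1 where s1: "V * pmat n p * adj V = sgn_bool s1 \<cdot>\<^sub>m pmat n (conj_fwd n V p)"
    and p1: "pauli_on n (conj_fwd n V p)"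
    using conj_fwd_spec[OF V p] by blast
  obtain s2 where s2: "U * pmat n (conj_fwd n V p) * adj U = sgn_bool s2 \<cdot>\<^sub>m pmat n (conj_fwd n U (conj_fwd n V p))"
    using conj_fwd_spec[OF U p1] by blast
  have "U * V * pmat n p * adj (U * V) = U * (V * pmat n p * adj V) * adj U"
    using cu cv by (simp add: adj_mult[OF cu(1) cv(1)] assoc_mult_mat[of _ "2^n" "2^n" _ "2^n" _ "2^n"])
  also have "\<dots> = sgn_bool s1 \<cdot>\<^sub>m (U * pmat n (conj_fwd n V p) * adj U)"
    using cu by (simp add: s1 mult_smult_sq[where N="2^n"])
  also have "\<dots> = sgn_bool (s1 \<noteq> s2) \<cdot>\<^sub>m pmat n (conj_fwd n U (conj_fwd n V p))"
    by (simp add: s2 smult_smult_mat sgn_bool_xor[symmetric])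
  finally show ?thesis by blast
qed

lemma clifford_mult:
  assumes U: "is_clifford n U" and V: "is_clifford n V"
  shows "is_clifford n (U * V)"
proof -
  note cu = clifford_unitary[OF U] and cv = clifford_unitary[OF V]
  have ad: "adj (U * V) = adj V * adj U" by (rule adj_mult[OF cu(1) cv(1)])
  have "adj (U * V) * (U * V) = 1\<^sub>m (2^n)"
  proof -
    have "adj V * adj U * (U * V) = adj V * (adj U * (U * V))"
      using cu cv by (simp add: assoc_mult_mat[of _ "2^n" "2^n" _ "2^n" _ "2^n"])
    then show ?thesis using cu cv ad by (simp add: clifford_cancel[OF U])
  qed
  moreover have "(U * V) * adj (U * V) = 1\<^sub>m (2^n)"
  proof -
    have "U * V * (adj V * adj U) = U * (V * (adj V * adj U))"
      using cu cv by (simp add: assoc_mult_mat[of _ "2^n" "2^n" _ "2^n" _ "2^n"])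
    then show ?thesis using cu cv ad by (simp add: clifford_cancel[OF V])
  qed
  moreover have "\<exists>S. pauli_on n (snd S) \<and> U * V * pmat n p * adj (U * V) = hpmat n S"
    if p: "pauli_on n p" for p
  proof -
    obtain s where "U * V * pmat n p * adj (U * V) = hpmat n (s, conj_fwd n U (conj_fwd n V p))"
      using conj_mult_pmat[OF U V p] by (auto simp: hpmat_Pair)
    moreover have "pauli_on n (conj_fwd n U (conj_fwd n V p))"
      using conj_fwd_spec[OF U] conj_fwd_spec[OF V p] by blast
    ultimately show ?thesis by (intro exI[of _ "(s, conj_fwd n U (conj_fwd n V p))"]) simp
  qed
  ultimately show ?thesis using cu cv unfolding is_clifford_def by simp
qed

lemma conj_fwd_mult:
  assumes U: "is_clifford n U" and V: "is_clifford n V" and p: "pauli_on n p"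
  shows "conj_fwd n (U * V) p = conj_fwd n U (conj_fwd n V p)"
proof -
  obtain s where "U * V * pmat n p * adj (U * V) = sgn_bool s \<cdot>\<^sub>m pmat n (conj_fwd n U (conj_fwd n V p))"
    using conj_mult_pmat[OF U V p] by blast
  moreover have "pauli_on n (conj_fwd n U (conj_fwd n V p))"
    using conj_fwd_spec[OF U] conj_fwd_spec[OF V p] by blast
  ultimately show ?thesis by (intro conj_fwd_unique[OF clifford_mult[OF U V] p])
qed

lemma conj_fwd_one: "pauli_on n p \<Longrightarrow> conj_fwd n (1\<^sub>m (2^n)) p = p"
  using conj_fwd_unique[OF clifford_one, where s=False and q=p and p=p] by (simp add: adj_one sgn_bool_def)

lemma clifford_foldl:
  assumes "is_clifford n A" "\<forall>U\<in>set Us. is_clifford n U"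
  shows "is_clifford n (foldl (\<lambda>acc U. U * acc) A Us)"
  using assms by (induction Us arbitrary: A) (auto intro: clifford_mult)

lemma conj_fwd_foldl:
  assumes "is_clifford n A" "\<forall>U\<in>set Us. is_clifford n U" "pauli_on n p"
  shows "conj_fwd n (foldl (\<lambda>acc U. U * acc) A Us) p = foldl (\<lambda>p U. conj_fwd n U p) (conj_fwd n A p) Us"
  using assms
proof (induction Us arbitrary: A)
  case Nil then show ?case by simp
next
  case (Cons U Us)
  have "conj_fwd n (U * A) p = conj_fwd n U (conj_fwd n A p)"
    using Cons.prems by (intro conj_fwd_mult) auto
  then show ?case using Cons.prems by (simp add: Cons.IH clifford_mult)
qed

lemma conjP_pid: assumes U: "is_clifford n U" shows "conjP n U pid = pid"
proof -
  note cu = clifford_unitary[OF U]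
  have "adj U * pmat n pid * U = sgn_bool False \<cdot>\<^sub>m pmat n pid"
    using cu by (simp add: pmat_pid sgn_bool_def right_mult_one_mat[OF cu(2)])
  then show ?thesis by (rule conjP_unique[OF U pauli_on_pid pauli_on_pid])
qed

lemma conjP_eq_pidD:
  assumes U: "is_clifford n U" and q: "pauli_on n q" and e: "conjP n U q = pid"
  shows "q = pid"
proof -
  note cu = clifford_unitary[OF U]
  obtain s where s: "adj U * pmat n q * U = sgn_bool s \<cdot>\<^sub>m pmat n (conjP n U q)"
    using conjP_spec[OF U q] by blast
  then have "adj U * pmat n q * U = sgn_bool s \<cdot>\<^sub>m 1\<^sub>m (2^n)" using e by (simp add: pmat_pid)
  then have "pmat n q = sgn_bool s \<cdot>\<^sub>m (U * 1\<^sub>m (2^n) * adj U)"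
    by (rule conj_smult_inverse[OF cu(2) cu(1) cu(4) pmat_carrier one_carrier_mat])
  then have "pmat n q = sgn_bool s \<cdot>\<^sub>m 1\<^sub>m (2^n)" using cu by simp
  then show ?thesis by (rule pmat_scalar_imp_pid[OF q])
qed

section \<open>Outcome flips caused by a Pauli fault\<close>

lemma meas_simps[simp]:
  "meas [] = []" "meas (Gate U l # C) = meas C" "meas (Meas S l # C) = (S,l) # meas C"
  by (simp_all add: meas_def)

text \<open>The outcome flips caused by a Pauli fault p inserted before the circuit.\<close>
fun flip_pattern :: "nat \<Rightarrow> op list \<Rightarrow> pauli \<Rightarrow> bool list" where
  "flip_pattern n [] p = []"
| "flip_pattern n (Gate U l # C) p = flip_pattern n C (conj_fwd n U p)"
| "flip_pattern n (Meas S l # C) p = anticomm n p (snd S) # flip_pattern n C p"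

lemma length_flip_pattern[simp]: "length (flip_pattern n C p) = length (meas C)"
  by (induction n C p rule: flip_pattern.induct) auto

lemma proj_carrier[simp]: "proj n S b \<in> carrier_mat (2^n) (2^n)"
  by (simp add: proj_def hpmat_def)

lemma exec_carrier:
  "\<forall>g\<in>set C. op_ok n g \<Longrightarrow> v \<in> carrier_vec (2^n) \<Longrightarrow> exec n C os v \<in> carrier_vec (2^n)"
proof (induction C arbitrary: os v)
  case Nil then show ?case by simp
next
  case (Cons g C)
  show ?case
  proof (cases g)
    case (Gate U l)
    then have "U \<in> carrier_mat (2^n) (2^n)" using Cons.prems by (auto simp: is_clifford_def)
    then show ?thesis using Gate Cons by simp
  next
    case (Meas S l)
    show ?thesis
    proof (cases os)
      case Nil then show ?thesis using Meas Cons by simp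
    next
      case (Cons b os')
      have "proj n S b *\<^sub>v v \<in> carrier_vec (2^n)" by (rule mult_mat_vec_carrier[OF proj_carrier Cons.prems(2)])
      then show ?thesis using Meas Cons Cons.IH Cons.prems by simp
    qed
  qed
qed

lemma exec_smult:
  "\<forall>g\<in>set C. op_ok n g \<Longrightarrow> v \<in> carrier_vec (2^n) \<Longrightarrow> exec n C os (c \<cdot>\<^sub>v v) = c \<cdot>\<^sub>v exec n C os v"
proof (induction C arbitrary: os v)
  case Nil then show ?case by simp
next
  case (Cons g C)
  show ?case
  proof (cases g)
    case (Gate U l)
    then have U: "U \<in> carrier_mat (2^n) (2^n)" using Cons.prems by (auto simp: is_clifford_def)
    then show ?thesis using Gate Cons by (simp add: mult_mat_vec[OF U])
  next
    case (Meas S l)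
    show ?thesis
    proof (cases os)
      case Nil then show ?thesis using Meas Cons by simp
    next
      case (Cons b os')
      have "proj n S b *\<^sub>v v \<in> carrier_vec (2^n)" by (rule mult_mat_vec_carrier[OF proj_carrier Cons.prems(2)])
      then show ?thesis using Meas Cons Cons.IH Cons.prems by (simp add: mult_mat_vec[OF proj_carrier])
    qed
  qed
qed

lemma proj_pmat_commute:
  assumes p: "pauli_on n p"
  shows "proj n S b * pmat n p = pmat n p * proj n S (b \<noteq> anticomm n (snd S) p)"
proof -
  let ?N = "2^n"
  let ?P = "pmat n p" and ?H = "pmat n (snd S)"
  have hp: "hpmat n S = sgn_bool (fst S) \<cdot>\<^sub>m ?H" by (rule hpmat_sgn_bool)
  have sb: "(if b then -1 else 1) = sgn_bool b" for b by (simp add: sgn_bool_def)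
  have HP: "?H * ?P = sgn_bool (anticomm n (snd S) p) \<cdot>\<^sub>m (?P * ?H)" by (rule pmat_commute_sign)
  have "proj n S b * ?P = (1/2) \<cdot>\<^sub>m (?P + (sgn_bool b * sgn_bool (fst S)) \<cdot>\<^sub>m (?H * ?P))"
    unfolding proj_def hp sb
    by (simp add: mult_smult_sq[where N="2^n"] add_mult_distrib_mat[of _ ?N ?N _ _ ?N] smult_smult_mat)
  also have "\<dots> = (1/2) \<cdot>\<^sub>m (?P + (sgn_bool (b \<noteq> anticomm n (snd S) p) * sgn_bool (fst S)) \<cdot>\<^sub>m (?P * ?H))"
    unfolding HP by (simp add: smult_smult_mat sgn_bool_def)
  also have "\<dots> = ?P * proj n S (b \<noteq> anticomm n (snd S) p)"
    unfolding proj_def hp sb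
    by (simp add: mult_smult_sq[where N="2^n"] mult_add_distrib_mat[of _ ?N ?N _ ?N] smult_smult_mat)
  finally show ?thesis .
qed

lemma xor_list_Cons: "xor_list (a # as) (b # bs) = (a \<noteq> b) # xor_list as bs"
  by (simp add: xor_list_def)

lemma xor_list_self: "xor_list a a = replicate (length a) False"
  by (induction a) (auto simp: xor_list_def)

lemma clifford_pmat_mult_vec:
  assumes U: "is_clifford n U" and p: "pauli_on n p" and v: "v \<in> carrier_vec (2^n)"
  shows "\<exists>s. U *\<^sub>v (pmat n p *\<^sub>v v) = sgn_bool s \<cdot>\<^sub>v (pmat n (conj_fwd n U p) *\<^sub>v (U *\<^sub>v v))"
proof -
  note cu = clifford_unitary[OF U]
  obtain s where s: "U * pmat n p * adj U = sgn_bool s \<cdot>\<^sub>m pmat n (conj_fwd n U p)"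
    using conj_fwd_spec[OF U p] by blast
  have "U * pmat n p = U * pmat n p * (adj U * U)"
    by (simp only: cu(3) right_mult_one_mat[OF mult_carrier_mat[OF cu(1) pmat_carrier]])
  also have "\<dots> = (U * pmat n p * adj U) * U"
    using cu by (simp add: assoc_mult_mat[of _ "2^n" "2^n" _ "2^n" _ "2^n"])
  finally have swap: "U * pmat n p = sgn_bool s \<cdot>\<^sub>m (pmat n (conj_fwd n U p) * U)"
    using cu by (simp add: s mult_smult_assoc_mat[of _ "2^n" "2^n"])
  have "U *\<^sub>v (pmat n p *\<^sub>v v) = (U * pmat n p) *\<^sub>v v"
    by (rule assoc_mult_mat_vec[symmetric, OF cu(1) pmat_carrier v])
  also have "\<dots> = sgn_bool s \<cdot>\<^sub>v ((pmat n (conj_fwd n U p) * U) *\<^sub>v v)"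
    unfolding swap by (rule smult_mat_vec[OF mult_carrier_mat[OF pmat_carrier cu(1)] v])
  also have "\<dots> = sgn_bool s \<cdot>\<^sub>v (pmat n (conj_fwd n U p) *\<^sub>v (U *\<^sub>v v))"
    by (simp add: assoc_mult_mat_vec[OF pmat_carrier cu(1) v])
  finally show ?thesis by blast
qed

lemma proj_pmat_mult_vec:
  assumes p: "pauli_on n p" and v: "v \<in> carrier_vec (2^n)"
  shows "proj n S b *\<^sub>v (pmat n p *\<^sub>v v) = pmat n p *\<^sub>v (proj n S (b \<noteq> anticomm n p (snd S)) *\<^sub>v v)"
proof -
  have "proj n S b *\<^sub>v (pmat n p *\<^sub>v v) = (proj n S b * pmat n p) *\<^sub>v v"
    by (rule assoc_mult_mat_vec[symmetric, OF proj_carrier pmat_carrier v])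
  also have "\<dots> = (pmat n p * proj n S (b \<noteq> anticomm n p (snd S))) *\<^sub>v v"
    unfolding proj_pmat_commute[OF p] by (simp add: anticomm_sym)
  also have "\<dots> = pmat n p *\<^sub>v (proj n S (b \<noteq> anticomm n p (snd S)) *\<^sub>v v)"
    by (rule assoc_mult_mat_vec[OF pmat_carrier proj_carrier v])
  finally show ?thesis .
qed

lemma exec_pmat_mult_vec:
  assumes "\<forall>g\<in>set C. op_ok n g" "v \<in> carrier_vec (2^n)" "pauli_on n p" "length os = length (meas C)"
  shows "\<exists>c p'. cmod c = 1 \<and> pauli_on n p' \<and>
     exec n C os (pmat n p *\<^sub>v v) = c \<cdot>\<^sub>v (pmat n p' *\<^sub>v exec n C (xor_list os (flip_pattern n C p)) v)"
  using assms
proof (induction C arbitrary: os p v)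
  case Nil then show ?case
    by (intro exI[of _ 1] exI[of _ p]) (simp add: xor_list_def)
next
  case (Cons g C)
  show ?case
  proof (cases g)
    case (Gate U l)
    then have U: "is_clifford n U" using Cons.prems by auto
    obtain s where s: "U *\<^sub>v (pmat n p *\<^sub>v v) = sgn_bool s \<cdot>\<^sub>v (pmat n (conj_fwd n U p) *\<^sub>v (U *\<^sub>v v))"
      using clifford_pmat_mult_vec[OF U Cons.prems(3,2)] by blast
    have pf: "pauli_on n (conj_fwd n U p)" using conj_fwd_spec[OF U Cons.prems(3)] by blast
    have Uv: "U *\<^sub>v v \<in> carrier_vec (2^n)" using clifford_unitary[OF U] Cons.prems by simp
    obtain c p' where cp: "cmod c = 1" "pauli_on n p'"
      "exec n C os (pmat n (conj_fwd n U p) *\<^sub>v (U *\<^sub>v v))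
         = c \<cdot>\<^sub>v (pmat n p' *\<^sub>v exec n C (xor_list os (flip_pattern n C (conj_fwd n U p))) (U *\<^sub>v v))"
      using Cons.IH[of "U *\<^sub>v v" "conj_fwd n U p" os] Cons.prems Gate pf Uv by auto
    have "exec n (g # C) os (pmat n p *\<^sub>v v) = exec n C os (sgn_bool s \<cdot>\<^sub>v (pmat n (conj_fwd n U p) *\<^sub>v (U *\<^sub>v v)))"
      using Gate s by simp
    also have "\<dots> = sgn_bool s \<cdot>\<^sub>v exec n C os (pmat n (conj_fwd n U p) *\<^sub>v (U *\<^sub>v v))"
      using Cons.prems mult_mat_vec_carrier[OF pmat_carrier Uv] by (intro exec_smult) auto
    also have "\<dots> = (sgn_bool s * c) \<cdot>\<^sub>v (pmat n p' *\<^sub>v exec n (g # C) (xor_list os (flip_pattern n (g # C) p)) v)"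
      using cp(3) Gate by (simp add: smult_smult_assoc)
    finally show ?thesis
      using cp(1,2) by (intro exI[of _ "sgn_bool s * c"] exI[of _ p']) (simp add: norm_mult norm_sgn_bool)
  next
    case (Meas S l)
    then obtain b os' where os: "os = b # os'" using Cons.prems(4) by (cases os) auto
    define b' where "b' = (b \<noteq> anticomm n p (snd S))"
    have pv: "proj n S b' *\<^sub>v v \<in> carrier_vec (2^n)"
      by (rule mult_mat_vec_carrier[OF proj_carrier Cons.prems(2)])
    obtain c p' where cp: "cmod c = 1" "pauli_on n p'"
      "exec n C os' (pmat n p *\<^sub>v (proj n S b' *\<^sub>v v))
         = c \<cdot>\<^sub>v (pmat n p' *\<^sub>v exec n C (xor_list os' (flip_pattern n C p)) (proj n S b' *\<^sub>v v))"
      using Cons.IH[of "proj n S b' *\<^sub>v v" p os'] Cons.prems Meas pv os by auto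
    have "exec n (g # C) os (pmat n p *\<^sub>v v) = exec n C os' (pmat n p *\<^sub>v (proj n S b' *\<^sub>v v))"
      using Meas os proj_pmat_mult_vec[OF Cons.prems(3,2)] by (simp add: b'_def)
    also have "\<dots> = c \<cdot>\<^sub>v (pmat n p' *\<^sub>v exec n (g # C) (xor_list os (flip_pattern n (g # C) p)) v)"
      using cp(3) Meas os by (simp add: xor_list_Cons b'_def)
    finally show ?thesis using cp(1,2) by blast
  qed
qed

lemma flip_pattern_in_outcome_code:
  assumes wf: "\<forall>g\<in>set C. op_ok n g" and z: "replicate (length (meas C)) False \<in> outcome_code n C"
    and p: "pauli_on n p"
  shows "flip_pattern n C p \<in> outcome_code n C"
proof -
  obtain \<psi> where psi: "\<psi> \<in> carrier_vec (2^n)" "sq_norm \<psi> = 1"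
    "outcome_prob n C \<psi> (replicate (length (meas C)) False) \<noteq> 0"
    using z unfolding outcome_code_def by blast
  let ?f = "flip_pattern n C p"
  obtain c p' where cp: "cmod c = 1" "pauli_on n p'"
    "exec n C ?f (pmat n p *\<^sub>v \<psi>) = c \<cdot>\<^sub>v (pmat n p' *\<^sub>v exec n C (xor_list ?f ?f) \<psi>)"
    using exec_pmat_mult_vec[OF wf psi(1) p, of ?f] by auto
  have ex: "exec n C (replicate (length (meas C)) False) \<psi> \<in> carrier_vec (2^n)"
    by (rule exec_carrier[OF wf psi(1)])
  have "outcome_prob n C (pmat n p *\<^sub>v \<psi>) ?f = outcome_prob n C \<psi> (replicate (length (meas C)) False)"
    unfolding outcome_prob_def cp(3) xor_list_self
    using ex by (simp add: sq_norm_smult cp(1) sq_norm_pmat_mult_vec)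
  moreover have "pmat n p *\<^sub>v \<psi> \<in> carrier_vec (2^n)" by (rule mult_mat_vec_carrier[OF pmat_carrier psi(1)])
  moreover have "sq_norm (pmat n p *\<^sub>v \<psi>) = 1" using sq_norm_pmat_mult_vec[OF psi(1)] psi(2) by simp
  ultimately show ?thesis using psi(3) unfolding outcome_code_def by auto
qed

section \<open>Propagating a fault through the levels\<close>

definition push_op :: "nat \<Rightarrow> op \<Rightarrow> pauli \<Rightarrow> pauli" where
  "push_op n g p = (case g of Gate U l \<Rightarrow> conj_fwd n U p | Meas S l \<Rightarrow> p)"

definition propagate :: "nat \<Rightarrow> op list \<Rightarrow> pauli \<Rightarrow> pauli" where
  "propagate n xs p = foldl (\<lambda>p g. push_op n g p) p xs"

lemma propagate_Nil[simp]: "propagate n [] p = p" by (simp add: propagate_def)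

lemma propagate_Cons[simp]: "propagate n (g # xs) p = propagate n xs (push_op n g p)" by (simp add: propagate_def)

lemma propagate_append: "propagate n (xs @ ys) p = propagate n ys (propagate n xs p)" by (simp add: propagate_def)

lemma pauli_on_push_op: "op_ok n g \<Longrightarrow> pauli_on n p \<Longrightarrow> pauli_on n (push_op n g p)"
  by (cases g) (auto simp: push_op_def dest: conj_fwd_spec)

lemma pauli_on_propagate: "\<forall>g\<in>set xs. op_ok n g \<Longrightarrow> pauli_on n p \<Longrightarrow> pauli_on n (propagate n xs p)"
  by (induction xs arbitrary: p) (auto simp: pauli_on_push_op)

definition level_gates :: "nat \<Rightarrow> op list \<Rightarrow> complex mat list" where
  "level_gates l xs = concat (map (\<lambda>g. case g of Gate U k \<Rightarrow> (if k = l then [U] else []) | Meas S k \<Rightarrow> []) xs)"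

lemma level_gates_simps[simp]: "level_gates l [] = []" "level_gates l (Gate U k # xs) = (if k = l then U # level_gates l xs else level_gates l xs)"
  "level_gates l (Meas S k # xs) = level_gates l xs"
  by (simp_all add: level_gates_def)

lemma U_level_eq_level_gates: "U_level n C l = foldl (\<lambda>acc U. U * acc) (1\<^sub>m (2^n)) (level_gates l C)"
  by (simp add: U_level_def level_gates_def)

lemma clifford_level_gates: "\<forall>g\<in>set xs. op_ok n g \<Longrightarrow> \<forall>U\<in>set (level_gates l xs). is_clifford n U"
proof (induction xs)
  case Nil then show ?case by simp
next
  case (Cons g xs) then show ?case by (cases g) auto
qed

lemma clifford_U_level: "\<forall>g\<in>set C. op_ok n g \<Longrightarrow> is_clifford n (U_level n C l)"
  unfolding U_level_eq_level_gates by (rule clifford_foldl[OF clifford_one clifford_level_gates])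

lemma propagate_level_filter:
  "propagate n (filter (\<lambda>g. op_level g = l) xs) p = foldl (\<lambda>p U. conj_fwd n U p) p (level_gates l xs)"
proof (induction xs arbitrary: p)
  case Nil then show ?case by simp
next
  case (Cons g xs) then show ?case by (cases g) (auto simp: push_op_def)
qed

lemma conj_fwd_U_level:
  assumes "\<forall>g\<in>set C. op_ok n g" "pauli_on n p"
  shows "conj_fwd n (U_level n C l) p = propagate n (filter (\<lambda>g. op_level g = l) C) p"
  unfolding U_level_eq_level_gates propagate_level_filter
  using conj_fwd_foldl[OF clifford_one clifford_level_gates[OF assms(1)] assms(2)] conj_fwd_one[OF assms(2)] by simp

lemma sorted_filter_split_at:
  assumes "sorted (map f xs)"
  shows "filter P xs = filter (\<lambda>x. P x \<and> f x < t) xs @ filter (\<lambda>x. P x \<and> t \<le> f x) xs"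
  using assms
proof (induction xs)
  case (Cons x xs)
  then have ge: "\<forall>y\<in>set xs. f x \<le> f y" by auto
  show ?case
  proof (cases "f x < t")
    case False
    then have "\<forall>y\<in>set xs. t \<le> f y" using ge by (meson order_trans not_le)
    then have "filter (\<lambda>x. P x \<and> f x < t) xs = []" "filter (\<lambda>x. P x \<and> t \<le> f x) xs = filter P xs"
      by (auto simp: filter_empty_conv not_less intro!: filter_cong)
    with False show ?thesis by (auto simp: not_less dest: leD)
  qed (use Cons in auto)
qed simp

lemma sorted_filter_split:
  assumes "sorted (map (f::'a\<Rightarrow>nat) xs)"
  shows "filter (\<lambda>x. f x \<le> Suc k) xs = filter (\<lambda>x. f x \<le> k) xs @ filter (\<lambda>x. f x = Suc k) xs"
proof -
  have "filter (\<lambda>x. f x \<le> Suc k \<and> f x < Suc k) xs = filter (\<lambda>x. f x \<le> k) xs"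
    "filter (\<lambda>x. f x \<le> Suc k \<and> Suc k \<le> f x) xs = filter (\<lambda>x. f x = Suc k) xs"
    by (auto intro: filter_cong)
  then show ?thesis using sorted_filter_split_at[OF assms, of "\<lambda>x. f x \<le> Suc k" "Suc k"] by simp
qed

lemma sorted_filter_split_lt:
  assumes "sorted (map (f::'a\<Rightarrow>nat) xs)" "\<forall>x\<in>set xs. f x \<le> L"
  shows "xs = filter (\<lambda>x. f x < L) xs @ filter (\<lambda>x. f x = L) xs"
proof -
  have "filter (\<lambda>x. L \<le> f x) xs = filter (\<lambda>x. f x = L) xs"
    using assms(2) by (intro filter_cong) (auto intro: antisym)
  then show ?thesis using sorted_filter_split_at[OF assms(1), of "\<lambda>_. True" L] by simp
qed

definition commutes :: "complex mat \<Rightarrow> complex mat \<Rightarrow> bool" where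
  "commutes U A \<longleftrightarrow> U * A = A * U"

lemma commutes_mult:
  assumes "U \<in> carrier_mat N N" "A \<in> carrier_mat N N" "B \<in> carrier_mat N N" "commutes U A" "commutes U B"
  shows "commutes U (A * B)"
proof -
  have "U * (A * B) = (U * A) * B" using assms by simp
  also have "\<dots> = A * (U * B)" using assms by (simp add: commutes_def)
  also have "\<dots> = (A * B) * U" using assms by (simp add: commutes_def)
  finally show ?thesis by (simp add: commutes_def)
qed

lemma commutes_smult:
  assumes "U \<in> carrier_mat N N" "A \<in> carrier_mat N N" "commutes U A"
  shows "commutes U (c \<cdot>\<^sub>m A)"
  using assms by (simp add: commutes_def mult_smult_sq[where N=N])

lemma commutes_pmat_ptimes:
  assumes "U \<in> carrier_mat (2^n) (2^n)" "commutes U (pmat n a)" "commutes U (pmat n b)"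
  shows "commutes U (pmat n (ptimes a b))"
proof -
  have "pmat n (ptimes a b) = (1 / mult_phase n a b) \<cdot>\<^sub>m (pmat n a * pmat n b)"
    using pmat_mult[of n a b] mult_phase_nonzero[of n a b] by (intro smult_eq_imp_eq_inverse_smult) auto
  moreover have "commutes U (pmat n a * pmat n b)"
    by (rule commutes_mult[OF assms(1) pmat_carrier pmat_carrier assms(2,3)])
  ultimately show ?thesis
    using commutes_smult[OF assms(1) mult_carrier_mat_sq[OF pmat_carrier pmat_carrier]] by simp
qed

definition pauli_prefix :: "nat \<Rightarrow> pauli \<Rightarrow> pauli" where
  "pauli_prefix k s = (\<lambda>i. i < k \<and> fst s i, \<lambda>i. i < k \<and> snd s i)"

lemma pauli_prefix_Suc: "pauli_prefix (Suc k) s = ptimes (pauli_prefix k s)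
   (ptimes (if fst s k then pX k else pid) (if snd s k then pZ k else pid))"
  by (auto simp: pauli_prefix_def ptimes_def pX_def pZ_def pid_def fun_eq_iff less_Suc_eq)

lemma gate_commute_pmat:
  assumes U: "is_clifford n U" and s: "pauli_on n s"
    and disj: "gate_support n U \<inter> {q. q < n \<and> (fst s q \<or> snd s q)} = {}"
  shows "commutes U (pmat n s)"
proof -
  note cu = clifford_unitary[OF U]
  have one: "commutes U (pmat n pid)" using cu by (simp add: commutes_def pmat_pid)
  have k: "commutes U (pmat n (pauli_prefix k s))" if "k \<le> n" for k
    using that
  proof (induction k)
    case 0
    have "pauli_prefix 0 s = pid" by (simp add: pauli_prefix_def pid_def)
    then show ?case using one by simp
  next
    case (Suc k)
    have cx: "commutes U (pmat n (if fst s k then pX k else pid))"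
    proof (cases "fst s k")
      case True
      then have "k \<notin> gate_support n U" using disj Suc.prems by auto
      then show ?thesis using True Suc.prems by (auto simp: gate_support_def commutes_def)
    qed (simp add: one)
    have cz: "commutes U (pmat n (if snd s k then pZ k else pid))"
    proof (cases "snd s k")
      case True
      then have "k \<notin> gate_support n U" using disj Suc.prems by auto
      then show ?thesis using True Suc.prems by (auto simp: gate_support_def commutes_def)
    qed (simp add: one)
    show ?case unfolding pauli_prefix_Suc
      using Suc commutes_pmat_ptimes[OF cu(1)] cx cz by simp
  qed
  have "pauli_prefix n s = s" using s by (auto simp: pauli_prefix_def pauli_on_def prod_eq_iff fun_eq_iff) (meson not_less)+
  then show ?thesis using k[of n] by simp
qed

lemma anticomm_conj_fwd_disjoint:
  assumes U: "is_clifford n U" and p: "pauli_on n p" and s: "pauli_on n s"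
    and disj: "gate_support n U \<inter> {q. q < n \<and> (fst s q \<or> snd s q)} = {}"
  shows "anticomm n (conj_fwd n U p) s = anticomm n p s"
proof -
  note cu = clifford_unitary[OF U]
  have c: "U * pmat n s = pmat n s * U" using gate_commute_pmat[OF assms(1,3,4)] by (simp add: commutes_def)
  have "adj U * pmat n s * U = adj U * (pmat n s * U)"
    by (rule assoc_mult_mat[OF cu(2) pmat_carrier cu(1)])
  also have "\<dots> = adj U * (U * pmat n s)" by (simp add: c)
  also have "\<dots> = sgn_bool False \<cdot>\<^sub>m pmat n s" using clifford_cancel(1)[OF U pmat_carrier] by (simp add: sgn_bool_def)
  finally have "conjP n U s = s" by (rule conjP_unique[OF U s s])
  then show ?thesis using anticomm_conj_fwd[OF U p s] by simp
qed

lemma anticomm_propagate_disjoint: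
  assumes "\<forall>g\<in>set ys. op_ok n g"
    "\<forall>U l. Gate U l \<in> set ys \<longrightarrow> gate_support n U \<inter> {q. q < n \<and> (fst s q \<or> snd s q)} = {}"
    "pauli_on n p" "pauli_on n s"
  shows "anticomm n (propagate n ys p) s = anticomm n p s"
  using assms
proof (induction ys arbitrary: p)
  case Nil then show ?case by simp
next
  case (Cons g ys)
  show ?case
  proof (cases g)
    case (Gate U l)
    then have U: "is_clifford n U" using Cons.prems by auto
    have pf: "pauli_on n (conj_fwd n U p)" using conj_fwd_spec[OF U Cons.prems(3)] by blast
    have "anticomm n (propagate n ys (conj_fwd n U p)) s = anticomm n (conj_fwd n U p) s"
      using Cons.IH[OF _ _ pf Cons.prems(4)] Cons.prems by auto
    also have "\<dots> = anticomm n p s"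
      using anticomm_conj_fwd_disjoint[OF U Cons.prems(3,4)] Cons.prems(2) Gate by auto
    finally show ?thesis using Gate by (simp add: push_op_def)
  next
    case (Meas S l)
    then show ?thesis using Cons by (simp add: push_op_def)
  qed
qed

lemma mem_meas_iff: "(S,l) \<in> set (meas C) \<longleftrightarrow> Meas S l \<in> set C"
proof (induction C)
  case Nil then show ?case by simp
next
  case (Cons g C) then show ?case by (cases g) auto
qed

lemma Meas_nth_meas: "j < length (meas C) \<Longrightarrow> Meas (fst (meas C ! j)) (snd (meas C ! j)) \<in> set C"
  using mem_meas_iff[of "fst (meas C ! j)" "snd (meas C ! j)" C] nth_mem[of j "meas C"] by simp

lemma wf_circuit_op_ok: "wf_circuit n C \<Longrightarrow> \<forall>g\<in>set C. op_ok n g"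
  by (simp add: wf_circuit_def)

lemma wf_circuit_level_pos: "wf_circuit n C \<Longrightarrow> g \<in> set C \<Longrightarrow> 1 \<le> op_level g"
  by (simp add: wf_circuit_def)

lemma wf_circuit_sorted: "wf_circuit n C \<Longrightarrow> sorted (map op_level C)"
  by (simp add: wf_circuit_def)

lemma op_level_le_depth: "g \<in> set C \<Longrightarrow> op_level g \<le> depth C"
  unfolding depth_def by (rule Max_ge) auto

lemma pauli_on_meas: "wf_circuit n C \<Longrightarrow> j < length (meas C) \<Longrightarrow> pauli_on n (snd (fst (meas C ! j)))"
  using Meas_nth_meas[of j C] wf_circuit_op_ok[of n C] by fastforce

lemma meas_level_bounds: "wf_circuit n C \<Longrightarrow> j < length (meas C) \<Longrightarrow> 1 \<le> snd (meas C ! j) \<and> snd (meas C ! j) \<le> depth C"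
  using Meas_nth_meas[of j C] wf_circuit_level_pos[of n C] op_level_le_depth[of _ C] by fastforce

lemma wf_circuit_same_level_disjoint:
  assumes w: "wf_circuit n C" and C: "C = pre @ Meas S L # rest" and g: "Gate U L \<in> set pre"
  shows "gate_support n U \<inter> {q. q < n \<and> (fst (snd S) q \<or> snd (snd S) q)} = {}"
proof -
  obtain i where i: "i < length pre" "pre ! i = Gate U L" using g by (auto simp: in_set_conv_nth)
  have "C ! i = Gate U L" using i C by (simp add: nth_append)
  moreover have "C ! length pre = Meas S L" using C by simp
  moreover have "length pre < length C" using C by simp
  ultimately have "op_support n (C ! i) \<inter> op_support n (C ! length pre) = {}"
    using w i unfolding wf_circuit_def by (metis op_level.simps)
  then show ?thesis using \<open>C ! i = Gate U L\<close> \<open>C ! length pre = Meas S L\<close> by simp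
qed

text \<open>The fault E at level 0.5 pushed through all gates of level \<le> k, i.e. its image at
  level k + 0.5.\<close>
definition propagate_upto :: "nat \<Rightarrow> op list \<Rightarrow> pauli \<Rightarrow> nat \<Rightarrow> pauli" where
  "propagate_upto n C E k = propagate n (filter (\<lambda>g. op_level g \<le> k) C) E"

lemma propagate_upto_0: "wf_circuit n C \<Longrightarrow> propagate_upto n C E 0 = E"
proof -
  assume w: "wf_circuit n C"
  have "filter (\<lambda>g. op_level g \<le> 0) C = []"
  proof -
    have "\<forall>g\<in>set C. \<not> op_level g \<le> 0" using wf_circuit_level_pos[OF w] by fastforce
    then show ?thesis by (simp add: filter_empty_conv)
  qed
  then show ?thesis by (simp add: propagate_upto_def)
qed

lemma pauli_on_propagate_upto: "wf_circuit n C \<Longrightarrow> pauli_on n E \<Longrightarrow> pauli_on n (propagate_upto n C E k)"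
  unfolding propagate_upto_def by (rule pauli_on_propagate) (auto dest: wf_circuit_op_ok)

lemma propagate_upto_Suc:
  assumes w: "wf_circuit n C" and E: "pauli_on n E"
  shows "propagate_upto n C E (Suc k) = conj_fwd n (U_level n C (Suc k)) (propagate_upto n C E k)"
proof -
  have "propagate_upto n C E (Suc k) = propagate n (filter (\<lambda>g. op_level g = Suc k) C) (propagate_upto n C E k)"
    unfolding propagate_upto_def sorted_filter_split[OF wf_circuit_sorted[OF w]] propagate_append ..
  also have "\<dots> = conj_fwd n (U_level n C (Suc k)) (propagate_upto n C E k)"
    by (rule conj_fwd_U_level[OF wf_circuit_op_ok[OF w] pauli_on_propagate_upto[OF w E], symmetric])
  finally show ?thesis .
qed

text \<open>The gates that share the level of a measurement and precede it act on qubits disjoint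
  from the measured Pauli, so they do not change whether the fault anticommutes with it.\<close>
lemma anticomm_at_meas:
  assumes w: "wf_circuit n C" and E: "pauli_on n E" and C: "C = pre @ Meas S L # rest"
  shows "anticomm n (propagate n pre E) (snd S) = anticomm n (propagate_upto n C E (L - 1)) (snd S)"
proof -
  have le: "\<forall>g\<in>set pre. op_level g \<le> L" and ge: "\<forall>g\<in>set rest. L \<le> op_level g"
    and sp: "sorted (map op_level pre)"
    using wf_circuit_sorted[OF w] unfolding C by (auto simp: sorted_append)
  have L1: "1 \<le> L" using wf_circuit_level_pos[OF w, of "Meas S L"] C by simp
  have split: "pre = filter (\<lambda>g. op_level g < L) pre @ filter (\<lambda>g. op_level g = L) pre"
    by (rule sorted_filter_split_lt[OF sp le])
  have below: "filter (\<lambda>g. op_level g \<le> L - 1) C = filter (\<lambda>g. op_level g < L) pre"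
  proof -
    have "filter (\<lambda>g. op_level g \<le> L - 1) rest = []" using ge L1 by (auto simp: filter_empty_conv)
    moreover have "filter (\<lambda>g. op_level g \<le> L - 1) pre = filter (\<lambda>g. op_level g < L) pre"
      using L1 by (intro filter_cong) auto
    ultimately show ?thesis using L1 C by simp
  qed
  have pS: "pauli_on n (snd S)" using w C by (auto simp: wf_circuit_def)
  have "propagate n pre E = propagate n (filter (\<lambda>g. op_level g = L) pre) (propagate_upto n C E (L - 1))"
    unfolding propagate_upto_def below by (subst split) (simp add: propagate_append)
  moreover have "anticomm n (propagate n (filter (\<lambda>g. op_level g = L) pre) (propagate_upto n C E (L - 1))) (snd S)
      = anticomm n (propagate_upto n C E (L - 1)) (snd S)"
    using wf_circuit_op_ok[OF w] C wf_circuit_same_level_disjoint[OF w C]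
    by (intro anticomm_propagate_disjoint[OF _ _ pauli_on_propagate_upto[OF w E] pS]) auto
  ultimately show ?thesis by simp
qed

lemma flip_pattern_suffix:
  assumes w: "wf_circuit n C0" and E: "pauli_on n E"
  shows "C0 = pre @ C' \<Longrightarrow> list_all2 (\<lambda>f x. f = anticomm n (propagate_upto n C0 E (snd x - 1)) (snd (fst x))) (flip_pattern n C' (propagate n pre E)) (meas C')"
proof (induction C' arbitrary: pre)
  case Nil then show ?case by simp
next
  case (Cons g C')
  show ?case
  proof (cases g)
    case (Gate U l)
    have "C0 = (pre @ [g]) @ C'" using Cons.prems by simp
    from Cons.IH[OF this] show ?thesis using Gate by (simp add: propagate_append push_op_def)
  next
    case (Meas S L)
    have "C0 = (pre @ [g]) @ C'" using Cons.prems by simp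
    from Cons.IH[OF this] have ih: "list_all2 (\<lambda>f x. f = anticomm n (propagate_upto n C0 E (snd x - 1)) (snd (fst x))) (flip_pattern n C' (propagate n pre E)) (meas C')"
      using Meas by (simp add: propagate_append push_op_def)
    have "anticomm n (propagate n pre E) (snd S) = anticomm n (propagate_upto n C0 E (L - 1)) (snd S)"
      using anticomm_at_meas[OF w E] Cons.prems Meas by simp
    then show ?thesis using ih Meas by simp
  qed
qed

lemma flip_pattern_nth:
  assumes w: "wf_circuit n C" and E: "pauli_on n E" and j: "j < length (meas C)"
  shows "flip_pattern n C E ! j = anticomm n (propagate_upto n C E (snd (meas C ! j) - 1)) (snd (fst (meas C ! j)))"
  using flip_pattern_suffix[OF w E, of "[]" C] j by (simp add: list_all2_conv_all_nth)

section \<open>The back-cumulant\<close>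

declare sum_of_bool_eq[simp del]

lemma backcum_pauli:
  assumes "wf_circuit n C" "\<forall>k. pauli_on n (F k)"
  shows "pauli_on n (backcum n C F k)"
  using assms
proof (induction n C F k rule: backcum.induct)
  case (1 n C F l)
  show ?case
  proof (cases "depth C \<le> l")
    case True then show ?thesis using 1 by (subst backcum.simps) simp
  next
    case False
    have "pauli_on n (backcum n C F (Suc l))" using 1 False by blast
    then have "pauli_on n (conjP n (U_level n C (Suc l)) (backcum n C F (Suc l)))"
      using conjP_spec[OF clifford_U_level[OF wf_circuit_op_ok[OF "1.prems"(1)]]] by blast
    then show ?thesis using False 1 by (subst backcum.simps) (simp add: pauli_on_ptimes)
  qed
qed

lemma anticomm_backcum:
  assumes "wf_circuit n C" "pauli_on n E" "\<forall>k. pauli_on n (F k)"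
  shows "k \<le> depth C \<Longrightarrow> anticomm n (propagate_upto n C E k) (backcum n C F k) = odd (\<Sum>k'\<in>{k..depth C}. (of_bool (anticomm n (propagate_upto n C E k') (F k')) :: nat))"
  using assms
proof (induction n C F k rule: backcum.induct)
  case (1 n C F l)
  show ?case
  proof (cases "depth C \<le> l")
    case True
    then have "l = depth C" using "1.prems" by simp
    then have "(\<Sum>k'\<in>{l..depth C}. (of_bool (anticomm n (propagate_upto n C E k') (F k')) :: nat)) = of_bool (anticomm n (propagate_upto n C E l) (F l))"
      by simp
    then show ?thesis using True by (subst backcum.simps) simp
  next
    case False
    note w = "1.prems"(2)
    let ?U = "U_level n C (Suc l)"
    let ?B = "backcum n C F (Suc l)"
    have U: "is_clifford n ?U" by (rule clifford_U_level[OF wf_circuit_op_ok[OF w]])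
    have Bp: "pauli_on n ?B" by (rule backcum_pauli[OF w "1.prems"(4)])
    have Ep: "pauli_on n (propagate_upto n C E l)" by (rule pauli_on_propagate_upto[OF w "1.prems"(3)])
    have ih: "anticomm n (propagate_upto n C E (Suc l)) ?B = odd (\<Sum>k'\<in>{Suc l..depth C}. (of_bool (anticomm n (propagate_upto n C E k') (F k')) :: nat))"
      using "1.IH"[OF False] False "1.prems" by simp
    have "anticomm n (propagate_upto n C E l) (backcum n C F l) = anticomm n (propagate_upto n C E l) (ptimes (F l) (conjP n ?U ?B))"
      using False by (subst backcum.simps) simp
    also have "\<dots> = (anticomm n (propagate_upto n C E l) (F l) \<noteq> anticomm n (propagate_upto n C E l) (conjP n ?U ?B))"
      by (rule anticomm_ptimes)
    also have "anticomm n (propagate_upto n C E l) (conjP n ?U ?B) = anticomm n (propagate_upto n C E (Suc l)) ?B"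
      using anticomm_conj_fwd[OF U Ep Bp] propagate_upto_Suc[OF w "1.prems"(3)] by simp
    finally show ?thesis using ih False
      by (simp add: sum.atLeast_Suc_atMost[of l "depth C"])
  qed
qed

lemma anticomm_foldr_ptimes:
  "anticomm n e (foldr (\<lambda>j acc. if P j then ptimes (T j) acc else acc) js a) =
     (odd (\<Sum>j\<leftarrow>js. (of_bool (P j \<and> anticomm n e (T j)) :: nat)) \<noteq> anticomm n e a)"
  by (induction js) (auto simp: anticomm_ptimes)

lemma pauli_on_foldr_ptimes:
  "(\<forall>j\<in>set js. P j \<longrightarrow> pauli_on n (T j)) \<Longrightarrow> pauli_on n a \<Longrightarrow>
    pauli_on n (foldr (\<lambda>j acc. if P j then ptimes (T j) acc else acc) js a)"
  by (induction js) (auto simp: pauli_on_ptimes)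

lemma foldr_ptimes_none:
  "(\<forall>j\<in>set js. \<not> P j) \<Longrightarrow> foldr (\<lambda>j acc. if P j then ptimes (T j) acc else acc) js a = a"
  by (induction js) auto

lemma sum_list_upt0: "(\<Sum>j\<leftarrow>[0..<m]. f j) = (\<Sum>j<m. (f j :: nat))"
  by (induction m) auto

lemma anticomm_Fu: "anticomm n e (Fu C u k) = odd (\<Sum>j<length (meas C).
    (of_bool (u ! j \<and> snd (meas C ! j) - 1 = k \<and> anticomm n e (snd (fst (meas C ! j)))) :: nat))"
  unfolding Fu_def anticomm_foldr_ptimes anticomm_pid sum_list_upt0 by (simp add: conj_assoc)

lemma pauli_on_Fu: "wf_circuit n C \<Longrightarrow> pauli_on n (Fu C u k)"
  unfolding Fu_def by (rule pauli_on_foldr_ptimes) (auto simp: pauli_on_meas pauli_on_pid)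

lemma Fu_eq_pid: "(\<forall>j<length (meas C). \<not> (u ! j \<and> snd (meas C ! j) - 1 = k)) \<Longrightarrow> Fu C u k = pid"
  unfolding Fu_def by (rule foldr_ptimes_none) auto

lemma Fu_eq_pid_off_levels:
  assumes w: "wf_circuit n C"
    and k: "Suc k \<notin> {snd (meas C ! j) | j. j < length (meas C) \<and> u ! j}"
  shows "Fu C u k = pid"
proof (rule Fu_eq_pid, intro allI impI notI)
  fix j assume j: "j < length (meas C)" and uj: "u ! j \<and> snd (meas C ! j) - 1 = k"
  then have "snd (meas C ! j) = Suc k" using meas_level_bounds[OF w j] by auto
  then have "Suc k \<in> {snd (meas C ! j) | j. j < length (meas C) \<and> u ! j}" using j uj by force
  with k show False by contradiction
qed

lemma odd_sum_of_bool_odd: "finite K \<Longrightarrow> odd (\<Sum>k\<in>K. (of_bool (odd (a k)) :: nat)) = odd (\<Sum>k\<in>K. a k)"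
  by (induction K rule: finite_induct) auto

lemma sum_of_bool_eq_card: "(\<Sum>j<(m::nat). (of_bool (P j) :: nat)) = card {j. j < m \<and> P j}"
  by (induction m) (auto simp: card_Suc_filter)

lemma sum_of_bool_delta:
  assumes "finite K" "c \<in> K"
  shows "(\<Sum>k\<in>K. (of_bool (A \<and> c = k \<and> X k) :: nat)) = of_bool (A \<and> X c)"
proof -
  have "(\<Sum>k\<in>K. (of_bool (A \<and> c = k \<and> X k) :: nat)) = (\<Sum>k\<in>K. (if k = c then of_bool (A \<and> X c) else 0))"
    by (rule sum.cong) auto
  also have "\<dots> = of_bool (A \<and> X c)" using assms by (simp add: sum.delta)
  finally show ?thesis .
qed

lemma anticomm_backcum_Fu_0:
  assumes w: "wf_circuit n C" and E: "pauli_on n E"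
  shows "anticomm n E (backcum n C (Fu C u) 0)
    = odd (card {j. j < length (meas C) \<and> u ! j \<and> flip_pattern n C E ! j})"
proof -
  let ?m = "length (meas C)" and ?D = "depth C" and ?f = "flip_pattern n C E"
  let ?a = "\<lambda>j k. (of_bool (u ! j \<and> snd (meas C ! j) - 1 = k
                 \<and> anticomm n (propagate_upto n C E k) (snd (fst (meas C ! j)))) :: nat)"
  have Fp: "\<forall>k. pauli_on n (Fu C u k)" using pauli_on_Fu[OF w] by blast
  have "anticomm n E (backcum n C (Fu C u) 0) = anticomm n (propagate_upto n C E 0) (backcum n C (Fu C u) 0)"
    by (simp add: propagate_upto_0[OF w])
  also have "\<dots> = odd (\<Sum>k\<in>{0..?D}. (of_bool (anticomm n (propagate_upto n C E k) (Fu C u k)) :: nat))"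
    by (rule anticomm_backcum[OF w E Fp]) simp
  also have "\<dots> = odd (\<Sum>k\<in>{0..?D}. (of_bool (odd (\<Sum>j<?m. ?a j k)) :: nat))"
    by (simp add: anticomm_Fu)
  also have "\<dots> = odd (\<Sum>k\<in>{0..?D}. \<Sum>j<?m. ?a j k)"
    by (rule odd_sum_of_bool_odd) simp
  also have "(\<Sum>k\<in>{0..?D}. \<Sum>j<?m. ?a j k) = (\<Sum>j<?m. \<Sum>k\<in>{0..?D}. ?a j k)"
    by (rule sum.swap)
  also have "\<dots> = (\<Sum>j<?m. (of_bool (u ! j \<and> ?f ! j) :: nat))"
  proof (rule sum.cong[OF refl])
    fix j assume "j \<in> {..<?m}"
    then have j: "j < ?m" by simp
    have "snd (meas C ! j) - 1 \<in> {0..?D}" using meas_level_bounds[OF w j] by auto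
    then have "(\<Sum>k\<in>{0..?D}. ?a j k)
        = of_bool (u ! j \<and> anticomm n (propagate_upto n C E (snd (meas C ! j) - 1)) (snd (fst (meas C ! j))))"
      by (intro sum_of_bool_delta) auto
    then show "(\<Sum>k\<in>{0..?D}. ?a j k) = of_bool (u ! j \<and> ?f ! j)"
      by (simp add: flip_pattern_nth[OF w E j])
  qed
  also have "\<dots> = card {j. j < ?m \<and> u ! j \<and> ?f ! j}" by (rule sum_of_bool_eq_card)
  finally show ?thesis .
qed

lemma backcum_Fu_0:
  assumes w: "wf_circuit n C"
    and lin: "linear_code (length (meas C)) (outcome_code n C)"
    and dual: "u \<in> dual_code (length (meas C)) (outcome_code n C)"
  shows "backcum n C (Fu C u) 0 = pid"
proof (rule anticomm_none_imp_pid)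
  show "pauli_on n (backcum n C (Fu C u) 0)"
    using backcum_pauli[OF w] pauli_on_Fu[OF w] by blast
  show "\<forall>E. pauli_on n E \<longrightarrow> \<not> anticomm n E (backcum n C (Fu C u) 0)"
  proof (intro allI impI)
    fix E assume E: "pauli_on n E"
    have "flip_pattern n C E \<in> outcome_code n C"
      using lin flip_pattern_in_outcome_code[OF wf_circuit_op_ok[OF w] _ E] by (simp add: linear_code_def)
    then show "\<not> anticomm n E (backcum n C (Fu C u) 0)"
      using dual anticomm_backcum_Fu_0[OF w E] by (simp add: dual_code_def)
  qed
qed

lemma backcum_eq_pid_upto:
  assumes w: "wf_circuit n C" and F: "\<forall>k. pauli_on n (F k)" and base: "backcum n C F 0 = pid"
  shows "l \<le> depth C \<Longrightarrow> \<forall>k<l. F k = pid \<Longrightarrow> backcum n C F l = pid"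
proof (induction l)
  case 0 then show ?case using base by simp
next
  case (Suc k)
  then have "backcum n C F k = pid" and "F k = pid" and "\<not> depth C \<le> k" by auto
  then have "conjP n (U_level n C (Suc k)) (backcum n C F (Suc k)) = pid"
    by (subst (asm) backcum.simps) simp
  then show ?case
    by (rule conjP_eq_pidD[OF clifford_U_level[OF wf_circuit_op_ok[OF w]] backcum_pauli[OF w F]])
qed

lemma backcum_eq_pid_from:
  assumes w: "wf_circuit n C" and above: "\<forall>k\<ge>l. F k = pid"
  shows "backcum n C F l = pid"
proof -
  have "backcum n C F k = pid" if "l \<le> k" for k
    using that
  proof (induction "depth C - k" arbitrary: k rule: less_induct)
    case less
    show ?case
    proof (cases "depth C \<le> k")
      case True
      then show ?thesis using above less.prems by (subst backcum.simps) simp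
    next
      case False
      then have "backcum n C F (Suc k) = pid" using less.hyps[of "Suc k"] less.prems by simp
      then show ?thesis using False above less.prems
        by (subst backcum.simps) (simp add: conjP_pid[OF clifford_U_level[OF wf_circuit_op_ok[OF w]]])
    qed
  qed
  then show ?thesis by simp
qed

theorem mainTheorem20:
  fixes n :: nat and C :: "op list" and u :: "bool list" and l :: nat
  assumes "wf_circuit n C"
    and "linear_code (length (meas C)) (outcome_code n C)"
    and "u \<in> dual_code (length (meas C)) (outcome_code n C)"
    and "True \<in> set u"
    and "l \<le> depth C"
    and "l < Min {snd (meas C ! j) | j. j < length (meas C) \<and> u ! j}
         \<or> Max {snd (meas C ! j) | j. j < length (meas C) \<and> u ! j} \<le> l"
  shows "backcum n C (Fu C u) l = pid"
proof -
  note w = assms(1)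
  let ?S = "{snd (meas C ! j) | j. j < length (meas C) \<and> u ! j}"
  have "?S \<subseteq> (\<lambda>j. snd (meas C ! j)) ` {..<length (meas C)}" by auto
  then have fin: "finite ?S" by (rule finite_subset) simp
  show ?thesis using assms(6)
  proof
    assume below: "l < Min ?S"
    have "\<forall>k<l. Fu C u k = pid"
    proof (intro allI impI Fu_eq_pid_off_levels[OF w] notI)
      fix k assume "k < l" "Suc k \<in> ?S"
      then show False using Min_le[OF fin] below by fastforce
    qed
    then show ?thesis
      using backcum_eq_pid_upto[OF w _ backcum_Fu_0[OF w assms(2,3)]] pauli_on_Fu[OF w] assms(5) by blast
  next
    assume above: "Max ?S \<le> l"
    have "\<forall>k\<ge>l. Fu C u k = pid"
    proof (intro allI impI Fu_eq_pid_off_levels[OF w] notI)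
      fix k assume "l \<le> k" "Suc k \<in> ?S"
      then show False using Max_ge[OF fin] above by fastforce
    qed
    then show ?thesis by (rule backcum_eq_pid_from[OF w])
  qed
qed

end
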